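(* Let $F_2$ be the free group on $g_1,g_2$ and $h:F_2\to\mathbb Z\times\mathbb Z$ the abelianisation homomorphism. Then the ideal $\ker(h^\#)\lhd\kappa F_2^\#$ is the principal ideal generated by $[\vec g_1,\vec g_2]\cdot[\vec g_1,\vec g_2]$.
   Context: Let $\kappa$ be a field of characteristic $0$. For a group $G$, let $*:\kappa G\to\kappa G$ be the $\kappa$-linear map with $g^*=g^{-1}$, $(\kappa G)^*$ its fixed points, and $A_G$ the quotient of $\kappa G$ by the two-sided ideal generated by all $ab-ba$, $a\in\kappa G$, $b\in(\kappa G)^*$; $*$ descends to $A_G$. $\kappa G^\#=\{x\in A_G:x^*=x\}$, $\Lambda_G=\{x\in A_G:x^*=-x\}$; group elements are identified with their images in $A_G$; $\vec x=\tfrac12(x-x^* )$; for $\vec x,\vec y\in\Lambda_G$, $\vec x\cdot\vec y=-\tfrac12(\vec x\vec y+\vec y\vec x)$ and $[\vec x,\vec y]=\tfrac12(\vec x\vec y-\vec y\vec x)$. A group homomorphism $f:G\to H$ induces a ring homomorphism $A_G\to A_H$ commuting with $*$, and $f^\#:\kappa G^\#\to\kappa H^\#$ is its restriction. *)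

theory Defs
  imports "HOL-Algebra.Group"
begin

definition galg :: "('a, 'b) monoid_scheme \<Rightarrow> ('a \<Rightarrow> 'k::field) set" where
  "galg G = {f. finite {x. f x \<noteq> 0} \<and> (\<forall>x. x \<notin> carrier G \<longrightarrow> f x = 0)}"

definition gdelta :: "'a \<Rightarrow> 'a \<Rightarrow> 'k::field" where
  "gdelta g = (\<lambda>x. if x = g then 1 else 0)"

definition gmul :: "('a, 'b) monoid_scheme \<Rightarrow> ('a \<Rightarrow> 'k::field) \<Rightarrow> ('a \<Rightarrow> 'k) \<Rightarrow> 'a \<Rightarrow> 'k" where
  "gmul G f g = (\<lambda>x. \<Sum>y\<in>{y. f y \<noteq> 0}. \<Sum>z\<in>{z. g z \<noteq> 0 \<and> y \<otimes>\<^bsub>G\<^esub> z = x}. f y * g z)"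

definition gstar :: "('a, 'b) monoid_scheme \<Rightarrow> ('a \<Rightarrow> 'k::field) \<Rightarrow> 'a \<Rightarrow> 'k" where
  "gstar G f = (\<lambda>x. if x \<in> carrier G then f (inv\<^bsub>G\<^esub> x) else 0)"

text \<open>The two-sided ideal I_G of kappa G generated by all ab - ba with a in kappa G and
  b in (kappa G)^*; A_G = kappa G / I_G.\<close>
inductive_set comm_ideal :: "('a, 'b) monoid_scheme \<Rightarrow> ('a \<Rightarrow> 'k::field) set" for G where
  gen: "a \<in> galg G \<Longrightarrow> b \<in> galg G \<Longrightarrow> gstar G b = b \<Longrightarrow>
          (\<lambda>x. gmul G a b x - gmul G b a x) \<in> comm_ideal G"
| zero: "(\<lambda>x. 0) \<in> comm_ideal G"
| add: "u \<in> comm_ideal G \<Longrightarrow> v \<in> comm_ideal G \<Longrightarrow> (\<lambda>x. u x + v x) \<in> comm_ideal G"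
| neg: "u \<in> comm_ideal G \<Longrightarrow> (\<lambda>x. - u x) \<in> comm_ideal G"
| lmul: "a \<in> galg G \<Longrightarrow> u \<in> comm_ideal G \<Longrightarrow> gmul G a u \<in> comm_ideal G"
| rmul: "a \<in> galg G \<Longrightarrow> u \<in> comm_ideal G \<Longrightarrow> gmul G u a \<in> comm_ideal G"

text \<open>Representatives in kappa G of the elements of kappa G^# = {x in A_G. x* = x}:
  y represents an element of kappa G^# iff y* - y lies in I_G.\<close>
definition sym_rep :: "('a, 'b) monoid_scheme \<Rightarrow> ('a \<Rightarrow> 'k::field) set" where
  "sym_rep G = {y \<in> galg G. (\<lambda>x. gstar G y x - y x) \<in> comm_ideal G}"

definition gvec :: "('a, 'b) monoid_scheme \<Rightarrow> ('a \<Rightarrow> 'k::field) \<Rightarrow> 'a \<Rightarrow> 'k" where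
  "gvec G f = (\<lambda>x. (f x - gstar G f x) / 2)"

definition glie :: "('a, 'b) monoid_scheme \<Rightarrow> ('a \<Rightarrow> 'k::field) \<Rightarrow> ('a \<Rightarrow> 'k) \<Rightarrow> 'a \<Rightarrow> 'k" where
  "glie G u v = (\<lambda>x. (gmul G u v x - gmul G v u x) / 2)"

definition gdot :: "('a, 'b) monoid_scheme \<Rightarrow> ('a \<Rightarrow> 'k::field) \<Rightarrow> ('a \<Rightarrow> 'k) \<Rightarrow> 'a \<Rightarrow> 'k" where
  "gdot G u v = (\<lambda>x. - (gmul G u v x + gmul G v u x) / 2)"

definition gpush :: "('a \<Rightarrow> 'c) \<Rightarrow> ('a \<Rightarrow> 'k::field) \<Rightarrow> 'c \<Rightarrow> 'k" where
  "gpush h f = (\<lambda>z. \<Sum>x\<in>{x. f x \<noteq> 0 \<and> h x = z}. f x)"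

text \<open>Representatives of the ideal of kappa G^# generated by (the class of) c:
  the least set containing c and I_G, closed under +, -, and two-sided multiplication
  by representatives of elements of kappa G^#.\<close>
inductive_set pideal :: "('a, 'b) monoid_scheme \<Rightarrow> ('a \<Rightarrow> 'k::field) \<Rightarrow> ('a \<Rightarrow> 'k) set"
  for G c where
  gen: "c \<in> pideal G c"
| zero: "(\<lambda>x. 0) \<in> pideal G c"
| add: "u \<in> pideal G c \<Longrightarrow> v \<in> pideal G c \<Longrightarrow> (\<lambda>x. u x + v x) \<in> pideal G c"
| neg: "u \<in> pideal G c \<Longrightarrow> (\<lambda>x. - u x) \<in> pideal G c"
| lmul: "r \<in> sym_rep G \<Longrightarrow> u \<in> pideal G c \<Longrightarrow> gmul G r u \<in> pideal G c"
| rmul: "r \<in> sym_rep G \<Longrightarrow> u \<in> pideal G c \<Longrightarrow> gmul G u r \<in> pideal G c"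
| cls: "u \<in> pideal G c \<Longrightarrow> w \<in> comm_ideal G \<Longrightarrow> (\<lambda>x. u x + w x) \<in> pideal G c"

text \<open>Letters: (generator, sign); generator False = g1, True = g2; sign True = +1, False = -1.\<close>
type_synonym f2letter = "bool \<times> bool"

fun f2_push :: "f2letter \<Rightarrow> f2letter list \<Rightarrow> f2letter list" where
  "f2_push a [] = [a]"
| "f2_push a (b # ys) = (if fst a = fst b \<and> snd a \<noteq> snd b then ys else a # b # ys)"

definition f2_red :: "f2letter list \<Rightarrow> f2letter list" where
  "f2_red xs = foldr f2_push xs []"

fun f2_reduced :: "f2letter list \<Rightarrow> bool" where
  "f2_reduced (a # b # ys) = (\<not> (fst a = fst b \<and> snd a \<noteq> snd b) \<and> f2_reduced (b # ys))"
| "f2_reduced _ = True"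

definition F2 :: "f2letter list monoid" where
  "F2 = \<lparr>carrier = {xs. f2_reduced xs}, mult = (\<lambda>xs ys. f2_red (xs @ ys)), one = []\<rparr>"

definition g1 :: "f2letter list" where "g1 = [(False, True)]"
definition g2 :: "f2letter list" where "g2 = [(True, True)]"

definition ZZ :: "(int \<times> int) monoid" where
  "ZZ = \<lparr>carrier = UNIV, mult = (\<lambda>a b. (fst a + fst b, snd a + snd b)), one = (0, 0)\<rparr>"

definition f2_ab :: "f2letter list \<Rightarrow> int \<times> int" where
  "f2_ab xs = (sum_list (map (\<lambda>(i, s). if \<not> i then (if s then 1 else -1) else 0) xs),
               sum_list (map (\<lambda>(i, s). if i then (if s then 1 else -1) else 0) xs))"

end

theory Submission
  imports Defs "HOL-Library.Poly_Mapping" "HOL-Library.Product_Plus"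
begin

text \<open>
  For the group ring of an arbitrary group we study
  the ideal cideal generated by the commutators with symmetric elements (the kernel of
  kappa G \<rightarrow> A_G), the set symm of elements that are symmetric modulo cideal (representatives of
  kappa G^#), and the ideal pid c of symm generated by c modulo cideal; symm is central modulo
  cideal.  For F2 write e1, e2 for vec g1, vec g2 and W = e1 e2 - e2 e1, so that the generator
  is csq = [e1,e2].[e1,e2] = -W^2/4.  Modulo cideal every element is a symm-combination of
  1, e1, e2, e1 e2, which yields tau (W x) \<in> pid csq for all x, where tau x = x + x*.  Hence
  swapping adjacent letters g1^{\<pm>1}, g2^{\<pm>1} in a word m changes tau m only modulo pid csq,
  and tau m \<equiv> tau (g1^i g2^j) where (i,j) is the abelianisation of m.  So a symmetric element
  with vanishing image in the group ring of Z \<times> Z lies in pid csq; conversely the induced map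
  to that commutative group ring kills cideal and csq.
\<close>

section \<open>The free group on two generators as a type\<close>

lemma f2_reduced_tl: "f2_reduced (a # L) \<Longrightarrow> f2_reduced L"
  by (cases L) auto

lemma f2_reduced_push: "f2_reduced L \<Longrightarrow> f2_reduced (f2_push a L)"
  by (cases L) (auto dest: f2_reduced_tl)

lemma f2_reduced_red: "f2_reduced (f2_red xs)"
  unfolding f2_red_def by (induction xs) (auto intro: f2_reduced_push)

lemma f2_red_Cons: "f2_red (a # xs) = f2_push a (f2_red xs)"
  by (simp add: f2_red_def)

lemma f2_red_id: "f2_reduced xs \<Longrightarrow> f2_red xs = xs"
proof (induction xs)
  case Nil then show ?case by (simp add: f2_red_def)
next
  case (Cons a xs)
  then have "f2_red xs = xs" using f2_reduced_tl by blast
  with Cons.prems show ?case by (cases xs) (auto simp: f2_red_Cons)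
qed

lemma f2_red_append: "f2_red (xs @ ys) = foldr f2_push xs (f2_red ys)"
  by (simp add: f2_red_def)

lemma f2_push_cancel:
  assumes "fst a = fst b" "snd a \<noteq> snd b" "f2_reduced X"
  shows "f2_push a (f2_push b X) = X"
proof (cases X)
  case Nil then show ?thesis using assms by auto
next
  case (Cons c X')
  show ?thesis
  proof (cases "fst b = fst c \<and> snd b \<noteq> snd c")
    case True
    then have ca: "c = a" using assms by (cases a, cases b, cases c) auto
    have "f2_push a X' = a # X'"
    proof (cases X')
      case (Cons d X'')
      then show ?thesis using assms(3) \<open>X = c # X'\<close> ca by auto
    qed simp
    then show ?thesis using Cons True ca by simp
  next
    case False
    then show ?thesis using Cons assms by auto
  qed
qed

lemma foldr_push_push:
  assumes "f2_reduced R" "f2_reduced L"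
  shows "foldr f2_push (f2_push a R) L = f2_push a (foldr f2_push R L)"
proof (cases R)
  case Nil then show ?thesis by simp
next
  case (Cons b R')
  show ?thesis
  proof (cases "fst a = fst b \<and> snd a \<noteq> snd b")
    case True
    have "f2_reduced (foldr f2_push R' L)"
      using assms(2) by (induction R') (auto intro: f2_reduced_push)
    then show ?thesis using Cons True f2_push_cancel[of a b] by simp
  next
    case False then show ?thesis using Cons by auto
  qed
qed

text \<open>Reduction is compatible with concatenation: this gives associativity.\<close>
lemma foldr_push_red:
  assumes "f2_reduced L"
  shows "foldr f2_push (f2_red xs) L = foldr f2_push xs L"
proof (induction xs)
  case Nil then show ?case by (simp add: f2_red_def)
next
  case (Cons a xs)
  have "foldr f2_push (f2_red (a # xs)) L = foldr f2_push (f2_push a (f2_red xs)) L"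
    by (simp add: f2_red_Cons)
  also have "\<dots> = f2_push a (foldr f2_push (f2_red xs) L)"
    by (rule foldr_push_push[OF f2_reduced_red assms])
  finally show ?case using Cons by simp
qed

lemma f2_red_red_left: "f2_red (f2_red A @ B) = f2_red (A @ B)"
  by (simp add: f2_red_append foldr_push_red f2_reduced_red)

lemma f2_red_red_right: "f2_red (A @ f2_red B) = f2_red (A @ B)"
  by (simp add: f2_red_append f2_red_id f2_reduced_red)

definition word_inv :: "f2letter list \<Rightarrow> f2letter list" where
  "word_inv xs = rev (map (\<lambda>(i, s). (i, \<not> s)) xs)"

lemma f2_red_word_inv: "f2_red (word_inv xs @ xs) = []"
proof (induction xs)
  case Nil then show ?case by (simp add: word_inv_def f2_red_def)
next
  case (Cons a xs)
  obtain i s where a: "a = (i, s)" by force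
  have "f2_red (word_inv (a # xs) @ a # xs)
        = foldr f2_push (word_inv xs) (f2_push (i, \<not> s) (f2_push a (f2_red xs)))"
    by (simp add: word_inv_def f2_red_append f2_red_Cons a)
  also have "\<dots> = foldr f2_push (word_inv xs) (f2_red xs)"
    using f2_push_cancel[of "(i, \<not> s)" a "f2_red xs"] f2_reduced_red a by simp
  also have "\<dots> = []" using Cons by (simp add: f2_red_append)
  finally show ?case .
qed

typedef free2 = "{xs. f2_reduced xs}"
  by (rule exI[of _ "[]"]) simp

setup_lifting type_definition_free2

instantiation free2 :: group_add
begin
lift_definition zero_free2 :: free2 is "[]" by simp
lift_definition plus_free2 :: "free2 \<Rightarrow> free2 \<Rightarrow> free2" is "\<lambda>x y. f2_red (x @ y)"
  by (rule f2_reduced_red)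
lift_definition uminus_free2 :: "free2 \<Rightarrow> free2" is "\<lambda>x. f2_red (word_inv x)"
  by (rule f2_reduced_red)
definition minus_free2 :: "free2 \<Rightarrow> free2 \<Rightarrow> free2" where "minus_free2 a b = a + - b"
instance
proof
  fix a b c :: free2
  show "a + b + c = a + (b + c)"
    by transfer (simp add: f2_red_red_left f2_red_red_right)
  show "0 + a = a" by transfer (simp add: f2_red_id)
  show "a + 0 = a" by transfer (simp add: f2_red_id)
  show "- a + a = 0" by transfer (simp add: f2_red_red_left f2_red_word_inv)
  show "a + - b = a - b" by (simp add: minus_free2_def)
qed
end

lemma F2_group: "group F2"
proof (rule groupI)
  fix x y z
  assume x: "x \<in> carrier F2" and y: "y \<in> carrier F2" and z: "z \<in> carrier F2"
  show "x \<otimes>\<^bsub>F2\<^esub> y \<in> carrier F2" by (simp add: F2_def f2_reduced_red)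
  show "x \<otimes>\<^bsub>F2\<^esub> y \<otimes>\<^bsub>F2\<^esub> z = x \<otimes>\<^bsub>F2\<^esub> (y \<otimes>\<^bsub>F2\<^esub> z)"
    by (simp add: F2_def f2_red_red_left f2_red_red_right)
  show "\<one>\<^bsub>F2\<^esub> \<otimes>\<^bsub>F2\<^esub> x = x" using x by (simp add: F2_def f2_red_id)
  show "\<exists>y\<in>carrier F2. y \<otimes>\<^bsub>F2\<^esub> x = \<one>\<^bsub>F2\<^esub>"
    by (rule bexI[of _ "f2_red (word_inv x)"])
      (simp_all add: F2_def f2_red_red_left f2_red_word_inv f2_reduced_red)
next
  show "\<one>\<^bsub>F2\<^esub> \<in> carrier F2" by (simp add: F2_def)
qed

lemma F2_carrier: "carrier F2 = {xs. f2_reduced xs}" by (simp add: F2_def)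
lemma F2_mult: "x \<otimes>\<^bsub>F2\<^esub> y = f2_red (x @ y)" by (simp add: F2_def)

lemma F2_mult_Rep: "Rep_free2 a \<otimes>\<^bsub>F2\<^esub> Rep_free2 b = Rep_free2 (a + b)"
  by (simp add: F2_mult plus_free2.rep_eq)

lemma F2_inv_Rep: "inv\<^bsub>F2\<^esub> (Rep_free2 a) = Rep_free2 (- a)"
proof -
  interpret group F2 by (rule F2_group)
  show ?thesis
  proof (rule inv_equality)
    show "Rep_free2 (- a) \<otimes>\<^bsub>F2\<^esub> Rep_free2 a = \<one>\<^bsub>F2\<^esub>"
      by (simp add: F2_mult_Rep) (simp add: zero_free2.rep_eq F2_def)
  qed (use Rep_free2 in \<open>auto simp: F2_carrier\<close>)
qed

lemma Rep_free2_plus: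
  "f2_reduced y \<Longrightarrow> f2_reduced z \<Longrightarrow> f2_red (y @ z) = Rep_free2 (Abs_free2 y + Abs_free2 z)"
  by (simp add: plus_free2.rep_eq Abs_free2_inverse)

lemma f2_ab_append: "f2_ab (xs @ ys) = f2_ab xs + f2_ab ys"
  by (simp add: f2_ab_def)

lemma f2_ab_red: "f2_ab (f2_red xs) = f2_ab xs"
proof (induction xs)
  case Nil then show ?case by (simp add: f2_red_def)
next
  case (Cons a xs)
  have push: "f2_ab (f2_push a L) = f2_ab (a # L)" for L
    by (cases L) (auto simp: f2_ab_def split: prod.splits)
  show ?case using Cons f2_ab_append[of "[a]" xs] f2_ab_append[of "[a]" "f2_red xs"]
    by (simp add: f2_red_Cons push)
qed

definition abel :: "free2 \<Rightarrow> int \<times> int" where "abel w = f2_ab (Rep_free2 w)"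

lemma abel_plus: "abel (x + y) = abel x + abel y"
  unfolding abel_def by transfer (simp add: f2_ab_red f2_ab_append)

definition letter :: "f2letter \<Rightarrow> free2" where "letter l = Abs_free2 [l]"

definition word_val :: "f2letter list \<Rightarrow> free2" where
  "word_val L = foldr (\<lambda>l acc. letter l + acc) L 0"

lemma word_val_simps: "word_val [] = 0" "word_val (l # L) = letter l + word_val L"
  by (simp_all add: word_val_def)

lemma word_val_append: "word_val (xs @ ys) = word_val xs + word_val ys"
  by (induction xs) (simp_all add: word_val_simps add.assoc)

lemma word_val_Rep: "word_val (Rep_free2 m) = m"
proof -
  have "Rep_free2 (word_val L) = f2_red L" for L
  proof (induction L)
    case Nil then show ?case by (simp add: word_val_simps zero_free2.rep_eq f2_red_def)
  next
    case (Cons l L)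
    then show ?case using f2_red_red_right[of "[l]" L]
      by (simp add: word_val_simps plus_free2.rep_eq letter_def Abs_free2_inverse)
  qed
  then show ?thesis
    using Rep_free2[of m] by (simp add: Rep_free2_inject[symmetric] f2_red_id)
qed

definition g1w :: free2 where "g1w = Abs_free2 g1"
definition g2w :: free2 where "g2w = Abs_free2 g2"

lemma letter_vals:
  "letter (False, True) = g1w" "letter (False, False) = - g1w"
  "letter (True, True) = g2w" "letter (True, False) = - g2w"
proof -
  show "letter (False, True) = g1w" by (simp add: letter_def g1w_def g1_def)
  show "letter (True, True) = g2w" by (simp add: letter_def g2w_def g2_def)
  have "Rep_free2 (- g1w) = [(False, False)]"
    by (simp add: uminus_free2.rep_eq g1w_def g1_def Abs_free2_inverse word_inv_def f2_red_def)
  then show "letter (False, False) = - g1w"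
    by (simp add: Rep_free2_inject[symmetric] letter_def Abs_free2_inverse)
  have "Rep_free2 (- g2w) = [(True, False)]"
    by (simp add: uminus_free2.rep_eq g2w_def g2_def Abs_free2_inverse word_inv_def f2_red_def)
  then show "letter (True, False) = - g2w"
    by (simp add: Rep_free2_inject[symmetric] letter_def Abs_free2_inverse)
qed

lemma abel_gens: "abel g1w = (1, 0)" "abel (- g1w) = (- 1, 0)" "abel g2w = (0, 1)" "abel (- g2w) = (0, - 1)"
proof -
  have L: "abel (letter (b, s)) = (if b then 0 else (if s then 1 else -1), if b then (if s then 1 else -1) else 0)"
    for b s by (simp add: abel_def letter_def Abs_free2_inverse f2_ab_def)
  show "abel g1w = (1, 0)" "abel (- g1w) = (- 1, 0)" "abel g2w = (0, 1)" "abel (- g2w) = (0, - 1)"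
    using L[of False True] L[of False False] L[of True True] L[of True False] by (simp_all add: letter_vals)
qed

section \<open>The group ring of an arbitrary group\<close>

abbreviation lk where "lk \<equiv> Poly_Mapping.lookup"
abbreviation sg where "sg \<equiv> Poly_Mapping.single"
abbreviation ks where "ks \<equiv> Poly_Mapping.keys"

lemma eq_add_iff: "((k::'a::group_add) = l + q) = (q = - l + k)"
  by (metis add_minus_cancel minus_add_cancel)

lemma lookup_mult_group: "lk (p * q) (k::'g::group_add) = (\<Sum>l. lk p l * lk q (- l + k))"
proof -
  have "(\<Sum>qa. lk q qa when k = l + qa) = lk q (- l + k)" for l
  proof -
    have "(\<Sum>qa. lk q qa when k = l + qa) = (\<Sum>qa. lk q qa when qa = - l + k)"
      by (rule Sum_any.cong) (simp add: eq_add_iff[of k])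
    then show ?thesis by simp
  qed
  then show ?thesis unfolding lookup_mult by simp
qed

lemma expansion: "p = (\<Sum>w\<in>ks p. sg w (lk p w))"
proof (rule poly_mapping_eqI)
  fix k
  have "lk (\<Sum>w\<in>ks p. sg w (lk p w)) k = (\<Sum>w\<in>ks p. (lk p w when w = k))"
    by (simp add: lookup_sum lookup_single)
  also have "\<dots> = lk p k"
  proof (cases "k \<in> ks p")
    case True
    then have "(\<Sum>w\<in>ks p. (lk p w when w = k)) = (\<Sum>w\<in>{k}. (lk p w when w = k))"
      by (intro sum.mono_neutral_right) auto
    then show ?thesis by simp
  next
    case False
    then show ?thesis by (auto simp: in_keys_iff when_def intro!: sum.neutral)
  qed
  finally show "lk p k = lk (\<Sum>w\<in>ks p. sg w (lk p w)) k" by simp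
qed

definition scal :: "'k::comm_ring_1 \<Rightarrow> 'g::monoid_add \<Rightarrow>\<^sub>0 'k" where "scal c = sg 0 c"

lemma Sum_any_when_zero:
  "(\<Sum>b. (X b when b = 0) when (k::'g::monoid_add) = a + b) = (X 0 when k = a)"
proof -
  have "(\<Sum>b. (X b when b = 0) when k = a + b) = (\<Sum>b. (X b when k = a) when b = 0)"
    by (rule Sum_any.cong) (simp add: when_def)
  then show ?thesis by simp
qed

lemma lookup_mult_scal: "lk (p * scal c) (k::'g::monoid_add) = lk p k * c"
  by (simp add: scal_def lookup_mult lookup_single mult_when when_mult Sum_any_right_distrib
      Sum_any_left_distrib eq_commute[of 0] Sum_any_when_zero)

lemma lookup_scal_mult: "lk (scal c * p) (k::'g::monoid_add) = c * lk p k"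
  by (simp add: scal_def lookup_mult lookup_single mult_when when_mult Sum_any_right_distrib
      Sum_any_left_distrib)

lemma scal_comm: "scal c * p = p * scal c"
  by (rule poly_mapping_eqI) (simp add: lookup_mult_scal lookup_scal_mult mult.commute)

lemma scal_mult: "scal a * scal b = scal (a * b)"
  by (simp add: scal_def mult_single)
lemma scal_add: "scal a + scal b = scal (a + b)"
  by (simp add: scal_def single_add)
lemma scal_neg: "- scal a = scal (- a)"
  by (simp add: scal_def single_uminus)
lemma scal_one: "scal 1 = 1"
  by (simp add: scal_def)
lemma scal_zero: "scal 0 = 0"
  by (simp add: scal_def)
lemma scal_sum: "finite A \<Longrightarrow> scal (sum f A) = (\<Sum>i\<in>A. scal (f i))"
  by (induction A rule: finite_induct) (simp_all add: scal_zero scal_add[symmetric])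

text \<open>Halving, available in characteristic 0.\<close>
definition half :: "'g::monoid_add \<Rightarrow>\<^sub>0 'k::field_char_0" where "half = scal (1/2)"

lemma twice_half: "(x + x) * half = x"
proof -
  have "(x + x) * half = x * (scal (1/2) + scal (1/2))" by (simp add: half_def algebra_simps)
  also have "\<dots> = x" by (simp add: scal_add scal_one)
  finally show ?thesis .
qed

lemma half_comm: "half * x = x * half" by (simp add: half_def scal_comm)

definition basis :: "'g \<Rightarrow> 'g \<Rightarrow>\<^sub>0 'k::comm_ring_1" where "basis w = sg w 1"

lemma basis_plus: "basis (x + y) = basis x * basis y"
  by (simp add: basis_def mult_single)
lemma basis_zero: "basis 0 = 1" by (simp add: basis_def)
lemma single_scal_basis: "sg w c = scal c * basis w"
  by (simp add: scal_def basis_def mult_single)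

definition star :: "('g::group_add \<Rightarrow>\<^sub>0 'k::comm_ring_1) \<Rightarrow> 'g \<Rightarrow>\<^sub>0 'k" where
  "star p = Abs_poly_mapping (\<lambda>w. lk p (- w))"

lemma lookup_star: "lk (star p) w = lk p (- w)"
proof -
  have "{w. lk p (- w) \<noteq> 0} = uminus ` ks p"
  proof (intro equalityI subsetI)
    fix x assume "x \<in> {w. lk p (- w) \<noteq> 0}"
    then show "x \<in> uminus ` ks p" by (intro image_eqI[of _ _ "- x"]) (auto simp: in_keys_iff)
  qed (auto simp: in_keys_iff)
  then have "finite {w. lk p (- w) \<noteq> 0}" by simp
  then show ?thesis by (simp add: star_def Abs_poly_mapping_inverse)
qed

lemma star_add: "star (p + q) = star p + star q"
  by (rule poly_mapping_eqI) (simp add: lookup_star lookup_add)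
lemma star_neg: "star (- p) = - star p"
  by (rule poly_mapping_eqI) (simp add: lookup_star lookup_uminus)
lemma star_diff: "star (p - q) = star p - star q"
  by (rule poly_mapping_eqI) (simp add: lookup_star lookup_minus)
lemma star_zero: "star 0 = 0"
  by (rule poly_mapping_eqI) (simp add: lookup_star)
lemma star_star: "star (star p) = p"
  by (rule poly_mapping_eqI) (simp add: lookup_star)
lemma star_single: "star (sg w c) = sg (- w) c"
  by (rule poly_mapping_eqI) (auto simp add: lookup_star lookup_single when_def)
lemma star_scal: "star (scal c) = scal c"
  by (simp add: scal_def star_single)
lemma star_half: "star half = half"
  by (simp add: half_def star_scal)
lemma star_basis: "star (basis w) = basis (- w)"
  by (simp add: basis_def star_single)

lemma star_mult: "star (p * q) = star q * star p"
proof (rule poly_mapping_eqI)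
  fix k
  have "lk (star (p * q)) k = (\<Sum>l. lk p l * lk q (- l + - k))"
    by (simp add: lookup_star lookup_mult_group)
  also have "\<dots> = (\<Sum>m. lk q (- m) * lk p (- k + m))"
  proof (rule Sum_any.reindex_cong[of "\<lambda>m. - k + m"])
    show "bij (\<lambda>m. - k + m)"
      by (rule bijI) (auto simp: inj_def image_iff intro!: exI[of _ "k + _"] simp: add.assoc[symmetric])
    show "(\<lambda>l. lk p l * lk q (- l + - k)) \<circ> (\<lambda>m. - k + m) = (\<lambda>m. lk q (- m) * lk p (- k + m))"
      by (auto simp: fun_eq_iff minus_add add.assoc mult.commute)
  qed
  also have "\<dots> = lk (star q * star p) k"
    by (simp add: lookup_star lookup_mult_group minus_add)
  finally show "lk (star (p * q)) k = lk (star q * star p) k" .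
qed

section \<open>Commutator ideal, symmetric elements and principal ideals in a group ring\<close>

text \<open>The ideal generated by all a b - b a with b symmetric; its quotient is A_G.\<close>
inductive_set cideal :: "('g::group_add \<Rightarrow>\<^sub>0 'k::comm_ring_1) set" where
  gen: "star b = b \<Longrightarrow> a * b - b * a \<in> cideal"
| zero: "0 \<in> cideal"
| add: "u \<in> cideal \<Longrightarrow> v \<in> cideal \<Longrightarrow> u + v \<in> cideal"
| neg: "u \<in> cideal \<Longrightarrow> - u \<in> cideal"
| lmul: "u \<in> cideal \<Longrightarrow> a * u \<in> cideal"
| rmul: "u \<in> cideal \<Longrightarrow> u * a \<in> cideal"

text \<open>Representatives of the symmetric elements of A_G, i.e. of kappa G^#.\<close>
definition symm :: "('g::group_add \<Rightarrow>\<^sub>0 'k::comm_ring_1) set" where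
  "symm = {p. star p - p \<in> cideal}"

inductive_set pid :: "('g::group_add \<Rightarrow>\<^sub>0 'k::comm_ring_1) \<Rightarrow> ('g \<Rightarrow>\<^sub>0 'k) set" for c where
  gen: "c \<in> pid c"
| zero: "0 \<in> pid c"
| add: "u \<in> pid c \<Longrightarrow> v \<in> pid c \<Longrightarrow> u + v \<in> pid c"
| neg: "u \<in> pid c \<Longrightarrow> - u \<in> pid c"
| lmul: "r \<in> symm \<Longrightarrow> u \<in> pid c \<Longrightarrow> r * u \<in> pid c"
| rmul: "r \<in> symm \<Longrightarrow> u \<in> pid c \<Longrightarrow> u * r \<in> pid c"
| cls: "u \<in> pid c \<Longrightarrow> w \<in> cideal \<Longrightarrow> u + w \<in> pid c"

lemma cideal_diff: "u \<in> cideal \<Longrightarrow> v \<in> cideal \<Longrightarrow> u - v \<in> cideal"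
  using cideal.add[OF _ cideal.neg, of u v] by simp

lemma cideal_half: "x + x \<in> cideal \<Longrightarrow> (x :: 'g::group_add \<Rightarrow>\<^sub>0 'k::field_char_0) \<in> cideal"
  using cideal.rmul[of "x + x" half] by (simp add: twice_half)

lemma star_cideal: "u \<in> cideal \<Longrightarrow> star u \<in> cideal"
proof (induction rule: cideal.induct)
  case (gen b a)
  have "star (a * b - b * a) = - (star a * b - b * star a)"
    using gen by (simp add: star_diff star_mult)
  then show ?case using cideal.neg[OF cideal.gen[OF gen]] by simp
next
  case zero then show ?case by (simp add: star_zero cideal.zero)
next
  case (add u v) then show ?case by (simp add: star_add cideal.add)
next
  case (neg u) then show ?case by (simp add: star_neg cideal.neg)
next
  case (lmul u a) then show ?case by (simp add: star_mult cideal.rmul)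
next
  case (rmul u a) then show ?case by (simp add: star_mult cideal.lmul)
qed

lemma symmI: "star p = p \<Longrightarrow> p \<in> symm"
  by (simp add: symm_def cideal.zero)

lemma symmD: "p \<in> symm \<Longrightarrow> star p - p \<in> cideal"
  by (simp add: symm_def)

text \<open>Elements that are symmetric modulo cideal are central modulo cideal: write
  2p = (p + p^* ) - (p^* - p) with p + p^* symmetric.\<close>
lemma symm_central:
  assumes "(p :: 'g::group_add \<Rightarrow>\<^sub>0 'k::field_char_0) \<in> symm"
  shows "p * y - y * p \<in> cideal"
proof -
  define s where "s = p + star p"
  define i where "i = star p - p"
  have ss: "star s = s" by (simp add: s_def star_add star_star add.commute)
  have i: "i \<in> cideal" using assms by (simp add: symm_def i_def)
  have "(p * y - y * p) + (p * y - y * p) = - (y * s - s * y) + (y * i - i * y)"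
    by (simp add: s_def i_def algebra_simps)
  also have "\<dots> \<in> cideal"
    by (intro cideal.add cideal.neg cideal.gen ss cideal_diff cideal.lmul cideal.rmul i)
  finally show ?thesis by (rule cideal_half)
qed

lemma symm_central':
  "(p :: 'g::group_add \<Rightarrow>\<^sub>0 'k::field_char_0) \<in> symm \<Longrightarrow> y * p - p * y \<in> cideal"
  using cideal.neg[OF symm_central[of p y]] by simp

lemma cideal_symm: "u \<in> cideal \<Longrightarrow> u \<in> symm"
  by (simp add: symm_def cideal_diff star_cideal)

lemma symm_add: "p \<in> symm \<Longrightarrow> q \<in> symm \<Longrightarrow> p + q \<in> symm"
  unfolding symm_def using cideal.add[of "star p - p" "star q - q"] by (simp add: star_add algebra_simps)

lemma symm_neg: "p \<in> symm \<Longrightarrow> - p \<in> symm"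
  unfolding symm_def using cideal.neg[of "star p - p"] by (simp add: star_neg algebra_simps)

text \<open>Products of symmetric elements are symmetric modulo cideal, since they commute.\<close>
lemma symm_mult:
  assumes p: "(p :: 'g::group_add \<Rightarrow>\<^sub>0 'k::field_char_0) \<in> symm" and q: "q \<in> symm"
  shows "p * q \<in> symm"
proof -
  have "star (p * q) - p * q = (star q - q) * star p + q * (star p - p) + (q * p - p * q)"
    by (simp add: star_mult algebra_simps)
  also have "\<dots> \<in> cideal"
    by (intro cideal.add cideal.rmul cideal.lmul symmD p q symm_central' symm_central)
  finally show ?thesis by (simp add: symm_def)
qed

lemma symm_scal: "scal c \<in> symm" by (rule symmI) (simp add: star_scal)

lemma symm_one: "1 \<in> symm" using symm_scal[of 1] by (simp add: scal_one)

lemma pid_of: "A - B \<in> cideal \<Longrightarrow> B \<in> pid c \<Longrightarrow> A \<in> pid c"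
  using pid.cls[of B c "A - B"] by simp

lemma cideal_pid: "w \<in> cideal \<Longrightarrow> w \<in> pid c"
  using pid.cls[OF pid.zero, of w c] by simp

lemma pid_trans: "A - B \<in> pid c \<Longrightarrow> B - D \<in> pid c \<Longrightarrow> A - D \<in> pid c"
  using pid.add[of "A - B" c "B - D"] by simp

lemma pid_sum: "finite A \<Longrightarrow> (\<And>i. i \<in> A \<Longrightarrow> f i \<in> pid c) \<Longrightarrow> sum f A \<in> pid c"
  by (induction A rule: finite_induct) (auto intro: pid.zero pid.add)

lemma pid_symm:
  assumes "(c :: 'g::group_add \<Rightarrow>\<^sub>0 'k::field_char_0) \<in> symm"
  shows "u \<in> pid c \<Longrightarrow> u \<in> symm"
proof (induction rule: pid.induct)
  case gen then show ?case by (rule assms)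
next
  case zero then show ?case by (rule symmI) (simp add: star_zero)
qed (auto intro: symm_add symm_neg symm_mult cideal_symm)

definition tau :: "('g::group_add \<Rightarrow>\<^sub>0 'k::comm_ring_1) \<Rightarrow> 'g \<Rightarrow>\<^sub>0 'k" where
  "tau p = p + star p"

lemma tau_add: "tau (p + q) = tau p + tau q"
  by (simp add: tau_def star_add algebra_simps)
lemma tau_diff: "tau (p - q) = tau p - tau q"
  by (simp add: tau_def star_diff algebra_simps)
lemma tau_zero: "tau 0 = 0" by (simp add: tau_def star_zero)
lemma tau_sum: "finite A \<Longrightarrow> tau (sum f A) = (\<Sum>i\<in>A. tau (f i))"
  by (induction A rule: finite_induct) (simp_all add: tau_zero tau_add)
lemma tau_scal_mult: "tau (scal c * p) = scal c * tau p"
  by (simp add: tau_def star_mult star_scal scal_comm distrib_left)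
lemma tau_cideal: "u \<in> cideal \<Longrightarrow> tau u \<in> cideal"
  by (simp add: tau_def cideal.add star_cideal)
lemma star_tau: "star (tau p) = tau p"
  by (simp add: tau_def star_add star_star add.commute)

lemma symm_half_tau:
  assumes "(p :: 'g::group_add \<Rightarrow>\<^sub>0 'k::field_char_0) \<in> symm"
  shows "p - tau p * half \<in> cideal"
proof -
  have "p - tau p * half = (p + p) * half - (p + star p) * half"
    by (simp add: tau_def twice_half)
  also have "\<dots> = - ((star p - p) * half)" by (simp add: algebra_simps)
  finally show ?thesis using symmD[OF assms] by (simp add: cideal.neg cideal.rmul)
qed

lemma tau_cyclic: "tau (p * q) - tau (q * p) \<in> cideal"
proof -
  have "tau (p * q) - tau (q * p) = (p * tau q - tau q * p) + (star q * tau p - tau p * star q)"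
    by (simp add: tau_def star_mult algebra_simps)
  also have "\<dots> \<in> cideal" by (intro cideal.add cideal.gen star_tau)
  finally show ?thesis .
qed

lemma tau_mult_symm:
  assumes "(b :: 'g::group_add \<Rightarrow>\<^sub>0 'k::field_char_0) \<in> symm"
  shows "tau (X * b) - b * tau X \<in> cideal"
proof -
  have "tau (X * b) - b * tau X = (X * b - b * X) + (star b - b) * star X"
    by (simp add: tau_def star_mult algebra_simps)
  also have "\<dots> \<in> cideal" by (intro cideal.add cideal.rmul symmD assms symm_central')
  finally show ?thesis .
qed

section \<open>Pushing group rings forward along a group homomorphism\<close>

definition push :: "('g \<Rightarrow> 'h) \<Rightarrow> ('g \<Rightarrow>\<^sub>0 'k::comm_ring_1) \<Rightarrow> 'h \<Rightarrow>\<^sub>0 'k" where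
  "push h p = Abs_poly_mapping (\<lambda>v. \<Sum>w. lk p w when h w = v)"

lemma Sum_any_when_keys: "(\<Sum>w. lk p w when h w = v) = (\<Sum>w\<in>{w \<in> ks p. h w = v}. lk p w)"
proof -
  have "(\<Sum>w. lk p w when h w = v) = (\<Sum>w\<in>{w \<in> ks p. h w = v}. (lk p w when h w = v))"
    by (rule Sum_any.expand_superset) (auto simp: in_keys_iff)
  also have "\<dots> = (\<Sum>w\<in>{w \<in> ks p. h w = v}. lk p w)" by (rule sum.cong) auto
  finally show ?thesis .
qed

lemma lookup_push: "lk (push h p) v = (\<Sum>w. lk p w when h w = v)"
proof -
  have "{v. (\<Sum>w. lk p w when h w = v) \<noteq> 0} \<subseteq> h ` ks p"
  proof
    fix v assume "v \<in> {v. (\<Sum>w. lk p w when h w = v) \<noteq> 0}"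
    then have "(\<Sum>w\<in>{w \<in> ks p. h w = v}. lk p w) \<noteq> 0" by (simp add: Sum_any_when_keys)
    then have "{w \<in> ks p. h w = v} \<noteq> {}" by (metis sum.empty)
    then show "v \<in> h ` ks p" by auto
  qed
  then have "finite {v. (\<Sum>w. lk p w when h w = v) \<noteq> 0}" by (rule finite_subset) simp
  then show ?thesis by (simp add: push_def Abs_poly_mapping_inverse)
qed

lemma push_add:
  fixes p q :: "'g \<Rightarrow>\<^sub>0 'k::comm_ring_1"
  shows "push h (p + q) = push h p + push h q"
proof (rule poly_mapping_eqI)
  fix v
  have fin: "finite {w. (lk r w when h w = v) \<noteq> 0}" for r :: "'g \<Rightarrow>\<^sub>0 'k::comm_ring_1"
    by (rule finite_subset[of _ "ks r"]) (auto simp: in_keys_iff)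
  show "lk (push h (p + q)) v = lk (push h p + push h q) v"
    unfolding lookup_push lookup_add when_add_distrib by (rule Sum_any.distrib[OF fin fin])
qed

lemma push_zero: "push h 0 = 0"
  by (rule poly_mapping_eqI) (simp add: lookup_push)

lemma push_neg: "push h (- p) = - push h p"
  using push_add[of h p "- p"] by (simp add: push_zero add_eq_0_iff)

lemma push_diff: "push h (p - q) = push h p - push h q"
  using push_add[of h p "- q"] by (simp add: push_neg)

lemma push_sum: "finite A \<Longrightarrow> push h (sum f A) = (\<Sum>i\<in>A. push h (f i))"
  by (induction A rule: finite_induct) (simp_all add: push_zero push_add)

lemma push_single: "push h (sg w c) = sg (h w) c"
proof (rule poly_mapping_eqI)
  fix v
  have "(\<Sum>w'. lk (sg w c) w' when h w' = v) = (\<Sum>w'. (c when h w = v) when w' = w)"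
    by (rule Sum_any.cong) (auto simp: lookup_single when_def)
  then show "lk (push h (sg w c)) v = lk (sg (h w) c) v"
    by (simp add: lookup_push lookup_single)
qed

lemma push_mult:
  assumes hom: "\<And>x y. h (x + y) = h x + h y"
  shows "push h (p * q) = push h p * push h q"
proof -
  have push_exp: "push h r = (\<Sum>w\<in>ks r. sg (h w) (lk r w))" for r
    using arg_cong[OF expansion[of r], of "push h"] by (simp add: push_sum push_single)
  have "p * q = (\<Sum>w\<in>ks p. \<Sum>w'\<in>ks q. sg (w + w') (lk p w * lk q w'))"
    by (subst expansion[of p], subst expansion[of q])
      (simp add: sum_distrib_left sum_distrib_right mult_single sum.swap[of _ "ks q"])
  then have "push h (p * q) = (\<Sum>w\<in>ks p. \<Sum>w'\<in>ks q. sg (h w + h w') (lk p w * lk q w'))"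
    by (simp add: push_sum push_single hom)
  also have "\<dots> = push h p * push h q"
    by (simp only: push_exp[of p] push_exp[of q] sum_distrib_left sum_distrib_right mult_single)
      (rule sum.swap)
  finally show ?thesis .
qed

lemma push_cideal:
  fixes h :: "'g::group_add \<Rightarrow> 'h::comm_monoid_add"
  assumes hom: "\<And>x y. h (x + y) = h x + h y"
  shows "u \<in> cideal \<Longrightarrow> push h u = 0"
proof (induction rule: cideal.induct)
  case (gen b a) then show ?case by (simp add: push_diff push_mult[OF hom] mult.commute)
qed (simp_all add: push_zero push_add push_neg push_mult[OF hom])

section \<open>The group algebra of F2 as the group ring of free2\<close>

lemma galgD: "f \<in> galg G \<Longrightarrow> finite {x. f x \<noteq> 0}" "f \<in> galg G \<Longrightarrow> x \<notin> carrier G \<Longrightarrow> f x = 0"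
  by (auto simp: galg_def)

lemma galg_F2_reduced: "f \<in> galg F2 \<Longrightarrow> f x \<noteq> 0 \<Longrightarrow> f2_reduced x"
  using galgD(2)[of f F2 x] by (auto simp: F2_carrier)

lemma galg_zero: "(\<lambda>x. 0) \<in> galg G" by (simp add: galg_def)

lemma galg_add: "f \<in> galg G \<Longrightarrow> g \<in> galg G \<Longrightarrow> (\<lambda>x. f x + g x) \<in> galg G"
  unfolding galg_def by (auto elim: finite_subset[rotated, OF finite_UnI])

lemma galg_neg: "f \<in> galg G \<Longrightarrow> (\<lambda>x. - f x) \<in> galg G"
  unfolding galg_def by auto

lemma galg_diff: "f \<in> galg G \<Longrightarrow> g \<in> galg G \<Longrightarrow> (\<lambda>x. f x - g x) \<in> galg G"
  using galg_add[OF _ galg_neg, of f G g] by simp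

lemma galg_scal: "f \<in> galg G \<Longrightarrow> (\<lambda>x. f x * c) \<in> galg G"
  unfolding galg_def by (auto elim: finite_subset[rotated])

definition to_ring :: "(f2letter list \<Rightarrow> 'k::field) \<Rightarrow> free2 \<Rightarrow>\<^sub>0 'k" where
  "to_ring f = Abs_poly_mapping (\<lambda>w. f (Rep_free2 w))"

definition of_ring :: "(free2 \<Rightarrow>\<^sub>0 'k::field) \<Rightarrow> f2letter list \<Rightarrow> 'k" where
  "of_ring p = (\<lambda>x. if f2_reduced x then lk p (Abs_free2 x) else 0)"

lemma lookup_to_ring:
  assumes "f \<in> galg F2" shows "lk (to_ring f) = (\<lambda>w. f (Rep_free2 w))"
proof -
  have "finite (Rep_free2 -` {x. f x \<noteq> 0})"
    by (rule finite_vimageI[OF galgD(1)[OF assms]]) (simp add: Rep_free2_inject inj_def)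
  then have "finite {w. f (Rep_free2 w) \<noteq> 0}" by (simp add: vimage_def)
  then show ?thesis unfolding to_ring_def by (simp add: Abs_poly_mapping_inverse)
qed

lemma of_ring_galg: "of_ring p \<in> galg F2"
proof -
  have "{x. of_ring p x \<noteq> 0} \<subseteq> Rep_free2 ` ks p"
  proof
    fix x assume "x \<in> {x. of_ring p x \<noteq> 0}"
    then have "f2_reduced x" "lk p (Abs_free2 x) \<noteq> 0" by (auto simp: of_ring_def split: if_splits)
    then show "x \<in> Rep_free2 ` ks p"
      by (metis Abs_free2_inverse image_eqI in_keys_iff mem_Collect_eq)
  qed
  then have "finite {x. of_ring p x \<noteq> 0}" by (rule finite_subset) simp
  then show ?thesis by (auto simp: galg_def of_ring_def F2_carrier)
qed

lemma of_ring_Rep: "of_ring p (Rep_free2 w) = lk p w"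
  using Rep_free2[of w] by (simp add: of_ring_def Rep_free2_inverse)

lemma to_of_ring: "to_ring (of_ring p) = p"
  by (rule poly_mapping_eqI) (simp add: lookup_to_ring[OF of_ring_galg] of_ring_Rep)

lemma of_to_ring: assumes "f \<in> galg F2" shows "of_ring (to_ring f) = f"
proof
  fix x show "of_ring (to_ring f) x = f x"
    using galg_F2_reduced[OF assms, of x]
    by (auto simp: of_ring_def lookup_to_ring[OF assms] Abs_free2_inverse)
qed

lemma of_ring_eq: "f \<in> galg F2 \<Longrightarrow> to_ring f = p \<Longrightarrow> of_ring p = f"
  using of_to_ring by blast

lemma to_ring_add: "f \<in> galg F2 \<Longrightarrow> g \<in> galg F2 \<Longrightarrow> to_ring (\<lambda>x. f x + g x) = to_ring f + to_ring g"
  by (rule poly_mapping_eqI) (simp add: lookup_to_ring galg_add lookup_add)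

lemma to_ring_neg: "f \<in> galg F2 \<Longrightarrow> to_ring (\<lambda>x. - f x) = - to_ring f"
  by (rule poly_mapping_eqI) (simp add: lookup_to_ring galg_neg lookup_uminus)

lemma to_ring_zero: "to_ring (\<lambda>x. 0) = 0"
  by (rule poly_mapping_eqI) (simp add: lookup_to_ring galg_zero)

lemma to_ring_diff: "f \<in> galg F2 \<Longrightarrow> g \<in> galg F2 \<Longrightarrow> to_ring (\<lambda>x. f x - g x) = to_ring f - to_ring g"
  using to_ring_add[OF _ galg_neg, of f g] to_ring_neg[of g] by simp

lemma to_ring_scal: "f \<in> galg F2 \<Longrightarrow> to_ring (\<lambda>x. f x * c) = to_ring f * scal c"
  by (rule poly_mapping_eqI) (simp add: lookup_to_ring galg_scal lookup_mult_scal)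

text \<open>Products.  In F2 the equation y z = x has the unique solution z = y^{-1} x.\<close>
lemma F2_mult_solve:
  assumes "f2_reduced y" "f2_reduced z"
  shows "y \<otimes>\<^bsub>F2\<^esub> z = Rep_free2 k \<longleftrightarrow> z = Rep_free2 (- Abs_free2 y + k)"
proof -
  have "y \<otimes>\<^bsub>F2\<^esub> z = Rep_free2 k \<longleftrightarrow> Abs_free2 y + Abs_free2 z = k"
    using assms by (simp add: F2_mult Rep_free2_plus Rep_free2_inject)
  also have "\<dots> \<longleftrightarrow> Abs_free2 z = - Abs_free2 y + k"
    using eq_add_iff[of k "Abs_free2 y" "Abs_free2 z"] by auto
  also have "\<dots> \<longleftrightarrow> z = Rep_free2 (- Abs_free2 y + k)"
    using assms(2) by (metis Abs_free2_inverse Rep_free2_inverse mem_Collect_eq)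
  finally show ?thesis .
qed

lemma gmul_F2_Rep:
  assumes f: "f \<in> galg F2" and g: "g \<in> galg F2"
  shows "gmul F2 f g (Rep_free2 k) = (\<Sum>y\<in>{y. f y \<noteq> 0}. f y * g (Rep_free2 (- Abs_free2 y + k)))"
  unfolding gmul_def
proof (rule sum.cong[OF refl])
  fix y assume "y \<in> {y. f y \<noteq> 0}"
  then have y: "f2_reduced y" using galg_F2_reduced[OF f] by auto
  define r where "r = Rep_free2 (- Abs_free2 y + k)"
  have "{z. g z \<noteq> 0 \<and> y \<otimes>\<^bsub>F2\<^esub> z = Rep_free2 k} \<subseteq> {r}"
    using F2_mult_solve[OF y] galg_F2_reduced[OF g] by (auto simp: r_def)
  moreover have "y \<otimes>\<^bsub>F2\<^esub> r = Rep_free2 k"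
    using F2_mult_solve[OF y, of r] Rep_free2[of "- Abs_free2 y + k"] by (simp add: r_def)
  ultimately have "(\<Sum>z\<in>{z. g z \<noteq> 0 \<and> y \<otimes>\<^bsub>F2\<^esub> z = Rep_free2 k}. f y * g z) = (\<Sum>z\<in>{r}. f y * g z)"
    by (intro sum.mono_neutral_left) auto
  then show "(\<Sum>z\<in>{z. g z \<noteq> 0 \<and> y \<otimes>\<^bsub>F2\<^esub> z = Rep_free2 k}. f y * g z)
      = f y * g (Rep_free2 (- Abs_free2 y + k))"
    by (simp add: r_def)
qed

lemma lookup_to_ring_mult:
  assumes f: "f \<in> galg F2" and g: "g \<in> galg F2"
  shows "lk (to_ring f * to_ring g) k = (\<Sum>y\<in>{y. f y \<noteq> 0}. f y * g (Rep_free2 (- Abs_free2 y + k)))"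
proof -
  have fin: "finite {l. f (Rep_free2 l) \<noteq> 0}"
    using finite_keys[of "to_ring f"] by (simp add: Poly_Mapping.keys.rep_eq lookup_to_ring[OF f])
  have supp: "{y. f y \<noteq> 0} = Rep_free2 ` {l. f (Rep_free2 l) \<noteq> 0}"
  proof (intro equalityI subsetI)
    fix y assume "y \<in> {y. f y \<noteq> 0}"
    then have "f y \<noteq> 0" "f2_reduced y" using galg_F2_reduced[OF f] by auto
    then show "y \<in> Rep_free2 ` {l. f (Rep_free2 l) \<noteq> 0}"
      by (metis (mono_tags, lifting) Abs_free2_inverse image_eqI mem_Collect_eq)
  qed auto
  have "lk (to_ring f * to_ring g) k = (\<Sum>l. f (Rep_free2 l) * g (Rep_free2 (- l + k)))"
    by (simp add: lookup_mult_group lookup_to_ring f g)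
  also have "\<dots> = (\<Sum>l\<in>{l. f (Rep_free2 l) \<noteq> 0}. f (Rep_free2 l) * g (Rep_free2 (- l + k)))"
    by (rule Sum_any.expand_superset[OF fin]) auto
  also have "\<dots> = (\<Sum>y\<in>{y. f y \<noteq> 0}. f y * g (Rep_free2 (- Abs_free2 y + k)))"
    unfolding supp by (simp add: sum.reindex inj_on_def Rep_free2_inject Rep_free2_inverse)
  finally show ?thesis .
qed

lemma gmul_of_ring:
  assumes f: "f \<in> galg F2" and g: "g \<in> galg F2"
  shows "gmul F2 f g = of_ring (to_ring f * to_ring g)"
proof
  fix x
  show "gmul F2 f g x = of_ring (to_ring f * to_ring g) x"
  proof (cases "f2_reduced x")
    case False
    have no_solution: "{z. g z \<noteq> 0 \<and> y \<otimes>\<^bsub>F2\<^esub> z = x} = {}" for y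
      using False f2_reduced_red by (auto simp: F2_mult)
    have "gmul F2 f g x = 0" unfolding gmul_def no_solution by simp
    then show ?thesis using False by (simp add: of_ring_def)
  next
    case True
    then obtain k where "x = Rep_free2 k" by (metis Abs_free2_inverse mem_Collect_eq)
    then show ?thesis by (simp add: gmul_F2_Rep lookup_to_ring_mult f g of_ring_Rep)
  qed
qed

lemma gmul_galg: "f \<in> galg F2 \<Longrightarrow> g \<in> galg F2 \<Longrightarrow> gmul F2 f g \<in> galg F2"
  by (simp add: gmul_of_ring of_ring_galg)

lemma to_ring_gmul: "f \<in> galg F2 \<Longrightarrow> g \<in> galg F2 \<Longrightarrow> to_ring (gmul F2 f g) = to_ring f * to_ring g"
  by (simp add: gmul_of_ring to_of_ring)

lemma gstar_of_ring:
  assumes "f \<in> galg F2" shows "gstar F2 f = of_ring (star (to_ring f))"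
proof
  fix x show "gstar F2 f x = of_ring (star (to_ring f)) x"
    by (cases "f2_reduced x")
      (auto simp: of_ring_def gstar_def F2_carrier lookup_star lookup_to_ring[OF assms]
        F2_inv_Rep[symmetric] Abs_free2_inverse)
qed

lemma gstar_galg: "f \<in> galg F2 \<Longrightarrow> gstar F2 f \<in> galg F2"
  by (simp add: gstar_of_ring of_ring_galg)

lemma to_ring_gstar: "f \<in> galg F2 \<Longrightarrow> to_ring (gstar F2 f) = star (to_ring f)"
  by (simp add: gstar_of_ring to_of_ring)

lemma of_ring_zero: "of_ring 0 = (\<lambda>x. 0)"
  by (rule of_ring_eq[OF galg_zero to_ring_zero])
lemma of_ring_add: "of_ring (p + q) = (\<lambda>x. of_ring p x + of_ring q x)"
  by (rule of_ring_eq) (simp_all add: galg_add of_ring_galg to_ring_add to_of_ring)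
lemma of_ring_neg: "of_ring (- p) = (\<lambda>x. - of_ring p x)"
  by (rule of_ring_eq) (simp_all add: galg_neg of_ring_galg to_ring_neg to_of_ring)
lemma of_ring_diff: "of_ring (p - q) = (\<lambda>x. of_ring p x - of_ring q x)"
  by (rule of_ring_eq) (simp_all add: galg_diff of_ring_galg to_ring_diff to_of_ring)
lemma of_ring_mult: "of_ring (p * q) = gmul F2 (of_ring p) (of_ring q)"
  by (rule of_ring_eq) (simp_all add: gmul_galg of_ring_galg to_ring_gmul to_of_ring)
lemma of_ring_star: "of_ring (star p) = gstar F2 (of_ring p)"
  by (rule of_ring_eq) (simp_all add: gstar_galg of_ring_galg to_ring_gstar to_of_ring)

lemma comm_ideal_to_ring: "u \<in> comm_ideal F2 \<Longrightarrow> u \<in> galg F2 \<and> to_ring u \<in> cideal"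
proof (induction rule: comm_ideal.induct)
  case (gen a b)
  then show ?case
    by (simp add: galg_diff gmul_galg to_ring_diff to_ring_gmul cideal.gen flip: to_ring_gstar)
next
  case zero then show ?case by (simp add: galg_zero to_ring_zero cideal.zero)
next
  case (add u v) then show ?case by (simp add: galg_add to_ring_add cideal.add)
next
  case (neg u) then show ?case by (simp add: galg_neg to_ring_neg cideal.neg)
next
  case (lmul a u) then show ?case by (simp add: gmul_galg to_ring_gmul cideal.lmul)
next
  case (rmul a u) then show ?case by (simp add: gmul_galg to_ring_gmul cideal.rmul)
qed

lemma of_ring_cideal: "p \<in> cideal \<Longrightarrow> of_ring p \<in> comm_ideal F2"
proof (induction rule: cideal.induct)
  case (gen b a)
  have "gstar F2 (of_ring b) = of_ring b" using gen by (simp flip: of_ring_star)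
  then show ?case
    by (simp add: of_ring_diff of_ring_mult comm_ideal.gen of_ring_galg)
next
  case zero then show ?case by (simp add: of_ring_zero comm_ideal.zero)
next
  case (add u v) then show ?case by (simp add: of_ring_add comm_ideal.add)
next
  case (neg u) then show ?case by (simp add: of_ring_neg comm_ideal.neg)
next
  case (lmul u a) then show ?case by (simp add: of_ring_mult comm_ideal.lmul of_ring_galg)
next
  case (rmul u a) then show ?case by (simp add: of_ring_mult comm_ideal.rmul of_ring_galg)
qed

lemma comm_ideal_iff: "u \<in> galg F2 \<Longrightarrow> u \<in> comm_ideal F2 \<longleftrightarrow> to_ring u \<in> cideal"
  using comm_ideal_to_ring of_ring_cideal of_to_ring by metis

lemma sym_rep_iff: "y \<in> sym_rep F2 \<longleftrightarrow> y \<in> galg F2 \<and> to_ring y \<in> symm"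
  unfolding sym_rep_def symm_def
  by (auto simp: comm_ideal_iff galg_diff gstar_galg to_ring_diff to_ring_gstar)

lemma pideal_to_ring:
  assumes c: "c \<in> galg F2"
  shows "u \<in> pideal F2 c \<Longrightarrow> u \<in> galg F2 \<and> to_ring u \<in> pid (to_ring c)"
proof (induction rule: pideal.induct)
  case gen then show ?case by (simp add: c pid.gen)
next
  case zero then show ?case by (simp add: galg_zero to_ring_zero pid.zero)
next
  case (add u v) then show ?case by (simp add: galg_add to_ring_add pid.add)
next
  case (neg u) then show ?case by (simp add: galg_neg to_ring_neg pid.neg)
next
  case (lmul r u) then show ?case by (auto simp: gmul_galg to_ring_gmul sym_rep_iff intro: pid.lmul)
next
  case (rmul r u) then show ?case by (auto simp: gmul_galg to_ring_gmul sym_rep_iff intro: pid.rmul)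
next
  case (cls u w) then show ?case
    using comm_ideal_to_ring[of w] by (auto simp: galg_add to_ring_add intro: pid.cls)
qed

lemma of_ring_pid:
  assumes c: "c \<in> galg F2"
  shows "p \<in> pid (to_ring c) \<Longrightarrow> of_ring p \<in> pideal F2 c"
proof (induction rule: pid.induct)
  case gen then show ?case by (simp add: c of_to_ring pideal.gen)
next
  case zero then show ?case by (simp add: of_ring_zero pideal.zero)
next
  case (add u v) then show ?case by (simp add: of_ring_add pideal.add)
next
  case (neg u) then show ?case by (simp add: of_ring_neg pideal.neg)
next
  case (lmul r u) then show ?case by (simp add: of_ring_mult sym_rep_iff of_ring_galg to_of_ring pideal.lmul)
next
  case (rmul r u) then show ?case by (simp add: of_ring_mult sym_rep_iff of_ring_galg to_of_ring pideal.rmul)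
next
  case (cls u w) then show ?case by (simp add: of_ring_add of_ring_cideal pideal.cls)
qed

lemma pideal_iff:
  "c \<in> galg F2 \<Longrightarrow> y \<in> pideal F2 c \<longleftrightarrow> y \<in> galg F2 \<and> to_ring y \<in> pid (to_ring c)"
  using pideal_to_ring of_ring_pid of_to_ring by metis

lemma gpush_push:
  assumes y: "y \<in> galg F2"
  shows "gpush f2_ab y v = lk (push abel (to_ring y)) v"
proof -
  have "lk (push abel (to_ring y)) v = (\<Sum>w\<in>{w \<in> ks (to_ring y). abel w = v}. y (Rep_free2 w))"
    unfolding lookup_push Sum_any_when_keys by (simp add: lookup_to_ring[OF y])
  also have "\<dots> = (\<Sum>x\<in>{x. y x \<noteq> 0 \<and> f2_ab x = v}. y x)"
  proof -
    have "{x. y x \<noteq> 0 \<and> f2_ab x = v} = Rep_free2 ` {w \<in> ks (to_ring y). abel w = v}"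
    proof (intro equalityI subsetI)
      fix x assume "x \<in> {x. y x \<noteq> 0 \<and> f2_ab x = v}"
      then have "y x \<noteq> 0" "f2_ab x = v" "f2_reduced x" using galg_F2_reduced[OF y] by auto
      then show "x \<in> Rep_free2 ` {w \<in> ks (to_ring y). abel w = v}"
        by (intro image_eqI[of _ _ "Abs_free2 x"])
          (auto simp: Abs_free2_inverse abel_def in_keys_iff lookup_to_ring[OF y])
    qed (auto simp: abel_def in_keys_iff lookup_to_ring[OF y])
    then show ?thesis by (simp add: sum.reindex inj_on_def Rep_free2_inject)
  qed
  finally show ?thesis by (simp add: gpush_def)
qed

lemma gmul_comm:
  assumes comm: "\<And>x y. x \<otimes>\<^bsub>G\<^esub> y = y \<otimes>\<^bsub>G\<^esub> x" and a: "a \<in> galg G" and b: "b \<in> galg G"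
  shows "gmul G a b = gmul G b a"
proof
  fix x
  have fa: "finite {y. a y \<noteq> 0}" and fb: "finite {y. b y \<noteq> 0}" using a b by (auto simp: galg_def)
  have "gmul G a b x = (\<Sum>y\<in>{y. a y \<noteq> 0}. \<Sum>z\<in>{z \<in> {z. b z \<noteq> 0}. y \<otimes>\<^bsub>G\<^esub> z = x}. a y * b z)"
    by (simp add: gmul_def)
  also have "\<dots> = (\<Sum>z\<in>{z. b z \<noteq> 0}. \<Sum>y\<in>{y \<in> {y. a y \<noteq> 0}. y \<otimes>\<^bsub>G\<^esub> z = x}. a y * b z)"
    by (rule sum.swap_restrict[OF fa fb])
  also have "\<dots> = gmul G b a x"
    by (simp add: gmul_def comm mult.commute conj_commute)
  finally show "gmul G a b x = gmul G b a x" .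
qed

lemma comm_ideal_abelian:
  assumes comm: "\<And>x y. x \<otimes>\<^bsub>G\<^esub> y = y \<otimes>\<^bsub>G\<^esub> x"
  shows "u \<in> comm_ideal G \<Longrightarrow> u = (\<lambda>x. 0)"
proof (induction rule: comm_ideal.induct)
  case (gen a b) then show ?case by (simp add: gmul_comm[OF comm])
next
  case (lmul a u) then show ?case by (simp add: gmul_def)
next
  case (rmul a u) then show ?case by (simp add: gmul_def)
qed simp_all

lemma comm_ideal_ZZ: "comm_ideal ZZ = {\<lambda>x. 0}"
  using comm_ideal_abelian[of ZZ] comm_ideal.zero by (fastforce simp: ZZ_def)

lemma gdelta_galg: "f2_reduced x \<Longrightarrow> gdelta x \<in> galg F2"
  by (auto simp: galg_def gdelta_def F2_carrier)

lemma to_ring_gdelta: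
  assumes x: "f2_reduced x" shows "to_ring (gdelta x) = basis (Abs_free2 x)"
  by (rule poly_mapping_eqI, unfold lookup_to_ring[OF gdelta_galg[OF x]])
    (auto simp: basis_def lookup_single gdelta_def when_def Abs_free2_inverse Rep_free2_inverse x)

lemma gvec_galg: "f \<in> galg F2 \<Longrightarrow> gvec F2 f \<in> galg F2"
  using galg_scal[OF galg_diff[OF _ gstar_galg], of f f "1/2"]
  by (simp add: gvec_def diff_divide_distrib)

lemma to_ring_gvec:
  assumes "f \<in> galg F2" shows "to_ring (gvec F2 f) = (to_ring f - star (to_ring f)) * half"
proof -
  have "gvec F2 f = (\<lambda>x. (\<lambda>x. f x - gstar F2 f x) x * (1/2))"
    by (simp add: gvec_def fun_eq_iff)
  then have "to_ring (gvec F2 f) = (to_ring f - to_ring (gstar F2 f)) * half"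
    using assms by (simp only: half_def to_ring_scal galg_diff gstar_galg to_ring_diff)
  then show ?thesis using assms by (simp add: to_ring_gstar)
qed

lemma glie_galg: "f \<in> galg F2 \<Longrightarrow> g \<in> galg F2 \<Longrightarrow> glie F2 f g \<in> galg F2"
  using galg_scal[OF galg_diff[OF gmul_galg gmul_galg], of f g g f "1/2"]
  by (simp add: glie_def diff_divide_distrib)

lemma to_ring_glie:
  assumes "f \<in> galg F2" "g \<in> galg F2"
  shows "to_ring (glie F2 f g) = (to_ring f * to_ring g - to_ring g * to_ring f) * half"
proof -
  have "glie F2 f g = (\<lambda>x. (\<lambda>x. gmul F2 f g x - gmul F2 g f x) x * (1/2))"
    by (simp add: glie_def fun_eq_iff)
  then have "to_ring (glie F2 f g) = (to_ring (gmul F2 f g) - to_ring (gmul F2 g f)) * half"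
    using assms by (simp only: half_def to_ring_scal galg_diff gmul_galg to_ring_diff)
  then show ?thesis using assms by (simp add: to_ring_gmul)
qed

lemma gdot_galg: "f \<in> galg F2 \<Longrightarrow> g \<in> galg F2 \<Longrightarrow> gdot F2 f g \<in> galg F2"
  using galg_scal[OF galg_neg[OF galg_add[OF gmul_galg gmul_galg]], of f g g f "1/2"]
  by (simp add: gdot_def)

lemma to_ring_gdot:
  assumes "f \<in> galg F2" "g \<in> galg F2"
  shows "to_ring (gdot F2 f g) = - (to_ring f * to_ring g + to_ring g * to_ring f) * half"
proof -
  have "gdot F2 f g = (\<lambda>x. (\<lambda>x. - (\<lambda>x. gmul F2 f g x + gmul F2 g f x) x) x * (1/2))"
    by (simp add: gdot_def fun_eq_iff)
  then have "to_ring (gdot F2 f g) = - (to_ring (gmul F2 f g) + to_ring (gmul F2 g f)) * half"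
    using assms by (simp only: half_def to_ring_scal galg_add galg_neg gmul_galg to_ring_add to_ring_neg)
  then show ?thesis using assms by (simp add: to_ring_gmul)
qed

section \<open>Decomposition of the group ring of F2 modulo the commutator ideal\<close>

definition sym_part :: "'g::group_add \<Rightarrow> 'g \<Rightarrow>\<^sub>0 'k::field_char_0" where
  "sym_part w = (basis w + basis (- w)) * half"

definition vec_part :: "'g::group_add \<Rightarrow> 'g \<Rightarrow>\<^sub>0 'k::field_char_0" where
  "vec_part w = (basis w - basis (- w)) * half"

lemma star_sym_part: "star (sym_part w) = sym_part w"
  by (simp add: sym_part_def star_mult star_add star_basis star_half half_comm add.commute)

lemma star_vec_part: "star (vec_part w) = - vec_part w"
  by (simp add: vec_part_def star_mult star_diff star_basis star_half half_comm algebra_simps)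

lemma basis_split: "basis w = sym_part w + vec_part w" "basis (- w) = sym_part w - vec_part w"
proof -
  have "sym_part w + vec_part w = (basis w + basis w) * half"
    by (simp add: sym_part_def vec_part_def algebra_simps)
  also have "\<dots> = basis w" by (rule twice_half)
  finally show "basis w = sym_part w + vec_part w" by (rule sym)
  have "sym_part w - vec_part w = (basis (- w) + basis (- w)) * half"
    by (simp add: sym_part_def vec_part_def algebra_simps)
  also have "\<dots> = basis (- w)" by (rule twice_half)
  finally show "basis (- w) = sym_part w - vec_part w" by (rule sym)
qed

type_synonym 'k F2ring = "free2 \<Rightarrow>\<^sub>0 'k"

definition e1 :: "'k::field_char_0 F2ring" where "e1 = vec_part g1w"
definition e2 :: "'k::field_char_0 F2ring" where "e2 = vec_part g2w"
definition W :: "'k::field_char_0 F2ring" where "W = e1 * e2 - e2 * e1"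

lemma star_e1: "star e1 = - e1" by (simp add: e1_def star_vec_part)
lemma star_e2: "star e2 = - e2" by (simp add: e2_def star_vec_part)
lemma star_W: "star W = - W" by (simp add: W_def star_diff star_mult star_e1 star_e2)

lemma e1_sq_symm: "e1 * e1 \<in> symm" by (rule symmI) (simp add: star_mult star_e1)
lemma e2_sq_symm: "e2 * e2 \<in> symm" by (rule symmI) (simp add: star_mult star_e2)
lemma e1_e2_anticomm_symm: "e1 * e2 + e2 * e1 \<in> symm"
  by (rule symmI) (simp add: star_mult star_add star_e1 star_e2 add.commute)

definition comb :: "'k F2ring \<Rightarrow> 'k F2ring \<Rightarrow> 'k F2ring \<Rightarrow> 'k F2ring \<Rightarrow> 'k::field_char_0 F2ring" where
  "comb a b c d = a + b * e1 + c * e2 + d * (e1 * e2)"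

definition decomp :: "'k::field_char_0 F2ring \<Rightarrow> bool" where
  "decomp p \<longleftrightarrow> (\<exists>a b c d. a \<in> symm \<and> b \<in> symm \<and> c \<in> symm \<and> d \<in> symm \<and> p - comb a b c d \<in> cideal)"

lemma decompI:
  "a \<in> symm \<Longrightarrow> b \<in> symm \<Longrightarrow> c \<in> symm \<Longrightarrow> d \<in> symm \<Longrightarrow> p - comb a b c d \<in> cideal \<Longrightarrow> decomp p"
  unfolding decomp_def by blast

lemma decomp_one: "decomp 1"
  by (rule decompI[of 1 0 0 0]) (simp_all add: comb_def symm_one cideal.zero cideal_symm)

lemma decomp_add:
  fixes p :: "'k::field_char_0 F2ring"
  assumes "decomp p" "decomp q" shows "decomp (p + q)"
proof -
  obtain a b c d where 1: "a \<in> symm" "b \<in> symm" "c \<in> symm" "d \<in> symm" "p - comb a b c d \<in> cideal"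
    using assms(1) decomp_def by blast
  obtain a' b' c' d' where 2: "a' \<in> symm" "b' \<in> symm" "c' \<in> symm" "d' \<in> symm" "q - comb a' b' c' d' \<in> cideal"
    using assms(2) decomp_def by blast
  have "(p + q) - comb (a + a') (b + b') (c + c') (d + d') = (p - comb a b c d) + (q - comb a' b' c' d')"
    by (simp add: comb_def algebra_simps)
  then show ?thesis using 1 2 by (metis decompI cideal.add symm_add)
qed

lemma decomp_neg:
  fixes p :: "'k::field_char_0 F2ring"
  assumes "decomp p" shows "decomp (- p)"
proof -
  obtain a b c d where 1: "a \<in> symm" "b \<in> symm" "c \<in> symm" "d \<in> symm" "p - comb a b c d \<in> cideal"
    using assms decomp_def by blast
  have "(- p) - comb (- a) (- b) (- c) (- d) = - (p - comb a b c d)"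
    by (simp add: comb_def algebra_simps)
  then show ?thesis using 1 by (metis decompI cideal.neg symm_neg)
qed

lemma decomp_diff: "decomp p \<Longrightarrow> decomp q \<Longrightarrow> decomp (p - q)"
  using decomp_add[OF _ decomp_neg, of p q] by simp

text \<open>Right multiplication by a symmetric element: it commutes past e1, e2 modulo cideal.\<close>
lemma decomp_mult_symm:
  fixes p :: "'k::field_char_0 F2ring"
  assumes "decomp p" "s \<in> symm" shows "decomp (p * s)"
proof -
  obtain a b c d where 1: "a \<in> symm" "b \<in> symm" "c \<in> symm" "d \<in> symm" "p - comb a b c d \<in> cideal"
    using assms(1) decomp_def by blast
  have "p * s - comb (a * s) (b * s) (c * s) (d * s) =
    (p - comb a b c d) * s + b * (e1 * s - s * e1) + c * (e2 * s - s * e2) + d * (e1 * e2 * s - s * (e1 * e2))"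
    by (simp add: comb_def algebra_simps)
  also have "\<dots> \<in> cideal"
    by (intro cideal.add cideal.rmul cideal.lmul 1 symm_central' assms(2))
  finally show ?thesis using 1 assms(2) by (intro decompI) (simp_all add: symm_mult)
qed

text \<open>Right multiplication by e1 uses e1^2 \<in> symm and e2 e1 = (e1 e2 + e2 e1) - e1 e2.\<close>
lemma decomp_mult_e1:
  fixes p :: "'k::field_char_0 F2ring"
  assumes "decomp p" shows "decomp (p * e1)"
proof -
  obtain a b c d where 1: "a \<in> symm" "b \<in> symm" "c \<in> symm" "d \<in> symm" "p - comb a b c d \<in> cideal"
    using assms decomp_def by blast
  define t :: "'k F2ring" where "t = e1 * e2 + e2 * e1"
  define m :: "'k F2ring" where "m = e1 * e1"
  have t: "t \<in> symm" and m: "m \<in> symm" unfolding t_def m_def by (rule e1_e2_anticomm_symm e1_sq_symm)+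
  have "p * e1 - comb (b * m + c * t) (a + d * t) (- (d * m)) (- c) =
    (p - comb a b c d) * e1 + d * (m * e2 - e2 * m)"
    by (simp add: comb_def t_def m_def algebra_simps)
  also have "\<dots> \<in> cideal" by (intro cideal.add cideal.rmul cideal.lmul 1 symm_central m)
  finally show ?thesis using 1 m t by (intro decompI) (auto intro!: symm_mult symm_add symm_neg)
qed

lemma decomp_mult_e2:
  fixes p :: "'k::field_char_0 F2ring"
  assumes "decomp p" shows "decomp (p * e2)"
proof -
  obtain a b c d where 1: "a \<in> symm" "b \<in> symm" "c \<in> symm" "d \<in> symm" "p - comb a b c d \<in> cideal"
    using assms decomp_def by blast
  define n :: "'k F2ring" where "n = e2 * e2"
  have n: "n \<in> symm" unfolding n_def by (rule e2_sq_symm)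
  have "p * e2 - comb (c * n) (d * n) a b = (p - comb a b c d) * e2 + d * (e1 * n - n * e1)"
    by (simp add: comb_def n_def algebra_simps)
  also have "\<dots> \<in> cideal" by (intro cideal.add cideal.rmul cideal.lmul 1 symm_central' n)
  finally show ?thesis using 1 n by (intro decompI) (auto intro!: symm_mult)
qed

lemma decomp_mult_letter:
  fixes p :: "'k::field_char_0 F2ring"
  assumes "decomp p" shows "decomp (p * basis (letter l))"
proof -
  have s: "(sym_part g1w :: 'k F2ring) \<in> symm" "(sym_part g2w :: 'k F2ring) \<in> symm"
    by (simp_all add: symmI star_sym_part)
  obtain b s where "l = (b, s)" by force
  then show ?thesis
    using assms s
    by (cases b; cases s)
      (simp_all add: letter_vals basis_split[of g1w] basis_split[of g2w] distrib_left right_diff_distrib e1_def[symmetric]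
        e2_def[symmetric] decomp_add decomp_diff decomp_mult_symm decomp_mult_e1 decomp_mult_e2)
qed

lemma decomp_basis: "decomp (basis m :: 'k::field_char_0 F2ring)"
proof -
  have "decomp (basis (word_val L) :: 'k F2ring)" for L
  proof (induction L rule: rev_induct)
    case Nil then show ?case by (simp add: word_val_simps basis_zero decomp_one)
  next
    case (snoc l L)
    then show ?case
      by (simp add: word_val_append word_val_simps basis_plus decomp_mult_letter)
  qed
  then show ?thesis using word_val_Rep[of m] by metis
qed

lemma decomp_all: "decomp (p :: 'k::field_char_0 F2ring)"
proof -
  have "decomp (\<Sum>w\<in>A. basis w * scal (lk p w) :: 'k F2ring)" if "finite A" for A
    using that
  proof (induction A rule: finite_induct)
    case empty then show ?case using decomp_diff[OF decomp_one decomp_one] by simp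
  next
    case (insert w A) then show ?case
      by (simp add: decomp_add decomp_mult_symm decomp_basis symm_scal)
  qed
  moreover have "p = (\<Sum>w\<in>ks p. basis w * scal (lk p w))"
    using expansion[of p] by (simp add: single_scal_basis scal_comm)
  ultimately show ?thesis by (metis finite_keys)
qed

section \<open>The generator and the key membership tau (W x) \<in> pid csq\<close>

definition bracket :: "'k::field_char_0 F2ring" where "bracket = (e1 * e2 - e2 * e1) * half"
definition csq :: "'k::field_char_0 F2ring" where "csq = - (bracket * bracket + bracket * bracket) * half"

lemma csq_W: "(csq :: 'k::field_char_0 F2ring) = W * W * scal (- 1/4)"
proof -
  have sq: "bracket * bracket = W * W * (half * half)"
    by (simp add: bracket_def W_def mult.assoc half_comm[of "(e1 * e2 - e2 * e1) * half"])
  have "csq = - (W * W) * ((half * half + half * half) * half)"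
    by (simp add: csq_def sq algebra_simps)
  also have "(half * half + half * half) * half = (scal (1/4) :: 'k F2ring)"
    by (simp add: half_def scal_mult scal_add)
  finally show ?thesis by (simp add: scal_neg[symmetric])
qed

lemma csq_symm: "csq \<in> symm"
  by (rule symmI) (simp add: csq_W star_mult star_W star_scal scal_comm)

lemma W_sq_pid: "W * W \<in> pid (csq :: 'k::field_char_0 F2ring)"
proof -
  have "csq * scal (- 4) = W * W * (scal (- 1/4) * scal (- 4) :: 'k F2ring)"
    by (simp add: csq_W mult.assoc)
  also have "\<dots> = W * W" by (simp add: scal_mult scal_one)
  finally show ?thesis using pid.rmul[OF symm_scal[of "- 4 :: 'k"] pid.gen[of "csq :: 'k F2ring"]] by simp
qed

lemma tau_W: "tau W = 0"
  by (simp add: tau_def star_W)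

lemma tau_W_e1: "tau (W * e1) \<in> cideal"
proof -
  have "tau (W * e1) = (e1 * e1) * e2 - e2 * (e1 * e1)"
    by (simp add: tau_def star_mult star_e1 star_W) (simp add: W_def algebra_simps)
  also have "\<dots> \<in> cideal" by (rule symm_central[OF e1_sq_symm])
  finally show ?thesis .
qed

lemma tau_W_e2: "tau (W * e2) \<in> cideal"
proof -
  have "tau (W * e2) = e1 * (e2 * e2) - (e2 * e2) * e1"
    by (simp add: tau_def star_mult star_e2 star_W) (simp add: W_def algebra_simps)
  also have "\<dots> \<in> cideal" by (rule symm_central'[OF e2_sq_symm])
  finally show ?thesis .
qed

lemma tau_W_e1e2: "tau (W * (e1 * e2)) \<in> pid csq"
proof -
  have "(tau (W * (e1 * e2)) - W * W) + (tau (W * (e1 * e2)) - W * W) =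
     W * (e1 * e2 + e2 * e1) - (e1 * e2 + e2 * e1) * W"
    by (simp add: tau_def star_mult star_e1 star_e2 star_W) (simp add: W_def algebra_simps)
  also have "\<dots> \<in> cideal" by (rule symm_central'[OF e1_e2_anticomm_symm])
  finally have "tau (W * (e1 * e2)) - W * W \<in> cideal" by (rule cideal_half)
  then show ?thesis using W_sq_pid by (rule pid_of)
qed

lemma tau_W_symm_mult:
  assumes b: "b \<in> symm" and T: "tau (W * Y) \<in> pid (csq :: 'k::field_char_0 F2ring)"
  shows "tau (W * (b * Y)) \<in> pid csq"
proof -
  have "tau (W * (b * Y)) - tau (W * Y * b) = tau (W * (b * Y - Y * b))"
    by (simp add: tau_diff[symmetric] algebra_simps)
  then have 1: "tau (W * (b * Y)) - tau (W * Y * b) \<in> cideal"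
    using tau_cideal[OF cideal.lmul[OF symm_central[OF b, of Y], of W]] by simp
  have "tau (W * Y * b) \<in> pid csq"
    using tau_mult_symm[OF b] pid.lmul[OF b T] by (rule pid_of)
  then show ?thesis using 1 by (rule pid_of[rotated])
qed

lemma tau_W_mult: "tau (W * p) \<in> pid (csq :: 'k::field_char_0 F2ring)"
proof -
  obtain a b c d where abcd: "a \<in> symm" "b \<in> symm" "c \<in> symm" "d \<in> symm"
    and i: "p - comb a b c d \<in> cideal"
    using decomp_all[of p] decomp_def by blast
  have "tau (W * p) = tau (W * (a * 1)) + tau (W * (b * e1)) + tau (W * (c * e2))
      + tau (W * (d * (e1 * e2))) + tau (W * (p - comb a b c d))"
    by (simp add: comb_def tau_add[symmetric] algebra_simps)
  also have "\<dots> \<in> pid csq"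
  proof (intro pid.add)
    show "tau (W * (a * 1)) \<in> pid csq" by (rule tau_W_symm_mult[OF abcd(1)]) (simp add: tau_W pid.zero)
    show "tau (W * (b * e1)) \<in> pid csq" by (rule tau_W_symm_mult[OF abcd(2) cideal_pid[OF tau_W_e1]])
    show "tau (W * (c * e2)) \<in> pid csq" by (rule tau_W_symm_mult[OF abcd(3) cideal_pid[OF tau_W_e2]])
    show "tau (W * (d * (e1 * e2))) \<in> pid csq" by (rule tau_W_symm_mult[OF abcd(4) tau_W_e1e2])
    show "tau (W * (p - comb a b c d)) \<in> pid csq" using i by (simp add: cideal_pid tau_cideal cideal.lmul)
  qed
  finally show ?thesis .
qed

section \<open>Reduction of words to the normal form g1^i g2^j modulo pid csq\<close>

primrec npow :: "'g::group_add \<Rightarrow> nat \<Rightarrow> 'g" where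
  "npow x 0 = 0" | "npow x (Suc n) = x + npow x n"

definition gpow :: "'g::group_add \<Rightarrow> int \<Rightarrow> 'g" where
  "gpow x i = (if 0 \<le> i then npow x (nat i) else npow (- x) (nat (- i)))"

lemma gpow_zero: "gpow x 0 = 0" by (simp add: gpow_def)

lemma gpow_succ: "gpow x (i + 1) = x + gpow x i"
proof (cases "0 \<le> i")
  case True
  then have "nat (i + 1) = Suc (nat i)" by simp
  then show ?thesis using True by (simp add: gpow_def)
next
  case False
  show ?thesis
  proof (cases "i = -1")
    case True then show ?thesis by (simp add: gpow_def)
  next
    case F: False
    then have "nat (- i) = Suc (nat (- (i + 1)))" using False by simp
    then show ?thesis using False F by (simp add: gpow_def add.assoc[symmetric])
  qed
qed

lemma gpow_pred: "gpow x (i - 1) = - x + gpow x i"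
  using gpow_succ[of x "i - 1"] by (simp add: minus_add_cancel)

definition nf :: "int \<times> int \<Rightarrow> free2" where "nf v = gpow g1w (fst v) + gpow g2w (snd v)"

definition tauw :: "free2 \<Rightarrow> 'k::field_char_0 F2ring" where "tauw w = tau (basis w)"

lemma basis_sign_split:
  assumes "v = w \<or> v = - w"
  shows "\<exists>a. basis v = sym_part w + scal a * (vec_part w :: 'g::group_add \<Rightarrow>\<^sub>0 'k::field_char_0)"
proof (cases "v = w")
  case True then show ?thesis
    using basis_split(1)[of w] by (intro exI[of _ 1]) (simp add: scal_one)
next
  case False then show ?thesis
    using assms basis_split(2)[of w] by (intro exI[of _ "- 1"]) (simp add: scal_one scal_neg[symmetric])
qed

lemma letter_commutator:
  assumes x: "x = g1w \<or> x = - g1w" and y: "y = g2w \<or> y = - g2w"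
  shows "\<exists>\<epsilon>. basis y * basis x - basis x * basis y - scal \<epsilon> * W \<in> (cideal :: 'k::field_char_0 F2ring set)"
proof -
  define S1 :: "'k F2ring" where "S1 = sym_part g1w"
  define S2 :: "'k F2ring" where "S2 = sym_part g2w"
  have S: "S1 \<in> symm" "S2 \<in> symm" by (simp_all add: S1_def S2_def symmI star_sym_part)
  obtain a where a: "basis x = S1 + scal a * e1"
    using basis_sign_split[OF x] by (auto simp: S1_def e1_def)
  obtain b where b: "basis y = S2 + scal b * e2"
    using basis_sign_split[OF y] by (auto simp: S2_def e2_def)
  have scalars: "scal c * p * (scal d * q) = scal (c * d) * (p * q)" for c d and p q :: "'k F2ring"
    by (metis mult.assoc scal_comm scal_mult)
  define A B where "A = scal a * e1" and "B = scal b * e2"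
  have "B * A = scal (a * b) * (e2 * e1)" "A * B = scal (a * b) * (e1 * e2)"
    using scalars[of b e2 a e1] scalars[of a e1 b e2] by (simp_all add: A_def B_def mult.commute)
  then have "B * A - A * B = scal (- (a * b)) * W"
    by (simp add: W_def scal_neg[symmetric] algebra_simps)
  then have "basis y * basis x - basis x * basis y - scal (- (a * b)) * W
      = (S2 * S1 - S1 * S2) + (S2 * A - A * S2) + (B * S1 - S1 * B)"
    by (simp add: a b A_def[symmetric] B_def[symmetric] algebra_simps)
  also have "\<dots> \<in> cideal" by (intro cideal.add symm_central symm_central' S)
  finally show ?thesis by blast
qed

lemma swap_letters:
  assumes x: "x = g1w \<or> x = - g1w" and y: "y = g2w \<or> y = - g2w"
  shows "tauw (P + y + x + Q) - tauw (P + x + y + Q) \<in> pid (csq :: 'k::field_char_0 F2ring)"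
proof -
  define D :: "'k F2ring" where "D = basis y * basis x - basis x * basis y"
  define Z :: "'k F2ring" where "Z = basis (Q + P)"
  obtain \<epsilon> where \<epsilon>: "D - scal \<epsilon> * W \<in> cideal"
    using letter_commutator[OF x y] by (auto simp: D_def)
  have "tauw (P + y + x + Q) - tauw (P + x + y + Q) = tau (basis P * (D * basis Q))"
    by (simp add: tauw_def basis_plus D_def tau_diff[symmetric] algebra_simps)
  moreover have "tau (basis P * (D * basis Q)) - tau (D * Z) \<in> cideal"
    using tau_cyclic[of "basis P" "D * basis Q"] by (simp add: Z_def basis_plus mult.assoc)
  moreover have "tau (D * Z) - tau (scal \<epsilon> * (W * Z)) \<in> cideal"
    using tau_cideal[OF cideal.rmul[OF \<epsilon>, of Z]] by (simp add: tau_diff left_diff_distrib mult.assoc)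
  moreover have "tau (scal \<epsilon> * (W * Z)) \<in> pid csq"
    by (simp add: tau_scal_mult pid.lmul[OF symm_scal tau_W_mult])
  ultimately show ?thesis by (metis pid_of)
qed

lemma move_past_g1_power:
  assumes y: "y = g2w \<or> y = - g2w"
  shows "\<forall>P Q. tauw (P + y + gpow g1w i + Q) - tauw (P + gpow g1w i + y + Q)
           \<in> pid (csq :: 'k::field_char_0 F2ring)"
proof (induction i rule: int_induct[where k = 0])
  case base then show ?case by (simp add: gpow_zero pid.zero)
next
  case (step1 i)
  show ?case
  proof (intro allI)
    fix P Q
    have "tauw (P + y + g1w + (gpow g1w i + Q)) - tauw (P + g1w + y + (gpow g1w i + Q)) \<in> pid (csq :: 'k F2ring)"
      by (rule swap_letters[OF _ y]) simp
    moreover have "tauw ((P + g1w) + y + gpow g1w i + Q) - tauw ((P + g1w) + gpow g1w i + y + Q)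
        \<in> pid (csq :: 'k F2ring)"
      using step1(2) by blast
    ultimately show "tauw (P + y + gpow g1w (i + 1) + Q) - tauw (P + gpow g1w (i + 1) + y + Q)
        \<in> pid (csq :: 'k F2ring)"
      by (simp add: gpow_succ add.assoc pid_trans)
  qed
next
  case (step2 i)
  show ?case
  proof (intro allI)
    fix P Q
    have "tauw (P + y + - g1w + (gpow g1w i + Q)) - tauw (P + - g1w + y + (gpow g1w i + Q))
        \<in> pid (csq :: 'k F2ring)"
      by (rule swap_letters[OF _ y]) simp
    moreover have "tauw ((P + - g1w) + y + gpow g1w i + Q) - tauw ((P + - g1w) + gpow g1w i + y + Q)
        \<in> pid (csq :: 'k F2ring)"
      using step2(2) by blast
    ultimately show "tauw (P + y + gpow g1w (i - 1) + Q) - tauw (P + gpow g1w (i - 1) + y + Q)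
        \<in> pid (csq :: 'k F2ring)"
      by (simp add: gpow_pred add.assoc pid_trans del: add_uminus_conv_diff)
  qed
qed

lemma tauw_word_nf:
  "\<forall>P. tauw (P + word_val L) - tauw (P + nf (abel (word_val L))) \<in> pid (csq :: 'k::field_char_0 F2ring)"
proof (induction L)
  case Nil
  have "abel 0 = (0, 0)" by (simp add: abel_def zero_free2.rep_eq f2_ab_def)
  then show ?case by (simp add: word_val_simps nf_def gpow_zero pid.zero)
next
  case (Cons l L)
  obtain b s where l: "l = (b, s)" by force
  obtain i j where ij: "abel (word_val L) = (i, j)" by force
  have ab: "abel (word_val (l # L)) = abel (letter l) + (i, j)"
    by (simp add: word_val_simps abel_plus ij)
  show ?case
  proof
    fix P
    have IH: "tauw ((P + letter l) + word_val L) - tauw ((P + letter l) + nf (i, j)) \<in> pid (csq :: 'k F2ring)"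
      using Cons.IH ij by auto
    have "tauw ((P + letter l) + nf (i, j)) - tauw (P + nf (abel (word_val (l # L)))) \<in> pid (csq :: 'k F2ring)"
    proof (cases b)
      case False
      then have "letter l + nf (i, j) = nf (abel (letter l) + (i, j))"
        using l by (cases s) (simp_all add: abel_gens nf_def letter_vals gpow_succ gpow_pred
            add.assoc add.commute[of 1] del: add_uminus_conv_diff)
      then show ?thesis by (simp add: ab add.assoc pid.zero)
    next
      case True
      define y where "y = letter l"
      have y: "y = g2w \<or> y = - g2w" using l True by (cases s) (simp_all add: y_def letter_vals)
      have "nf (abel (letter l) + (i, j)) = gpow g1w i + y + gpow g2w j"
        using l True by (cases s) (simp_all add: y_def abel_gens nf_def letter_vals gpow_succ gpow_pred
            add.assoc add.commute[of 1] del: add_uminus_conv_diff)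
      then show ?thesis
        using move_past_g1_power[OF y, of i, rule_format, of P "gpow g2w j"]
        by (simp add: ab nf_def y_def add.assoc)
    qed
    then show "tauw (P + word_val (l # L)) - tauw (P + nf (abel (word_val (l # L)))) \<in> pid (csq :: 'k F2ring)"
      using pid_trans[OF IH] by (simp add: word_val_simps add.assoc)
  qed
qed

lemma tauw_nf: "tauw m - tauw (nf (abel m)) \<in> pid (csq :: 'k::field_char_0 F2ring)"
  using spec[OF tauw_word_nf[of "Rep_free2 m"], of 0] by (simp add: word_val_Rep)

text \<open>Indeed tau p is a combination of the tauw w, and grouping them by the
  abelianisation shows tau p \<in> pid csq.\<close>
lemma symm_ker_pid:
  assumes S: "(p :: 'k::field_char_0 F2ring) \<in> symm" and E: "push abel p = 0"
  shows "p \<in> pid csq"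
proof -
  let ?K = "ks p"
  have tau_p: "tau p = (\<Sum>w\<in>?K. scal (lk p w) * tauw w)"
    by (subst expansion) (simp add: tau_sum single_scal_basis tau_scal_mult tauw_def)
  have fibre: "(\<Sum>w\<in>{w \<in> ?K. abel w = v}. lk p w) = 0" for v
    using arg_cong[OF E, of "\<lambda>q. lk q v"] by (simp add: lookup_push Sum_any_when_keys)
  have d: "tau p - (\<Sum>w\<in>?K. scal (lk p w) * tauw (nf (abel w))) \<in> pid csq"
    unfolding tau_p sum_subtractf[symmetric] right_diff_distrib[symmetric]
    by (intro pid_sum pid.lmul symm_scal tauw_nf) simp
  have "(\<Sum>w\<in>?K. scal (lk p w) * tauw (nf (abel w)) :: 'k F2ring) =
      (\<Sum>v\<in>abel ` ?K. \<Sum>w\<in>{w \<in> ?K. abel w = v}. scal (lk p w) * tauw (nf (abel w)))"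
    by (rule sum.image_gen) simp
  also have "\<dots> = (\<Sum>v\<in>abel ` ?K. scal (\<Sum>w\<in>{w \<in> ?K. abel w = v}. lk p w) * tauw (nf v))"
    by (intro sum.cong refl) (simp add: scal_sum sum_distrib_right)
  also have "\<dots> = 0" by (simp add: fibre scal_zero)
  finally have "tau p \<in> pid csq" using d by simp
  then have "tau p * half \<in> pid csq" by (simp add: half_def pid.rmul symm_scal)
  then show ?thesis by (rule pid_of[OF symm_half_tau[OF S]])
qed

section \<open>The kernel of the abelianisation equals pid csq\<close>

lemma push_abel_W: "push abel (W :: 'k::field_char_0 F2ring) = 0"
  by (simp add: W_def push_diff push_mult[OF abel_plus] mult.commute)

lemma push_abel_pid: "u \<in> pid (csq :: 'k::field_char_0 F2ring) \<Longrightarrow> push abel u = 0"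
proof (induction rule: pid.induct)
  case gen then show ?case by (simp add: csq_W push_mult[OF abel_plus] push_abel_W)
next
  case (cls u w) then show ?case using push_cideal[OF abel_plus, of w] by (simp add: push_add)
qed (simp_all add: push_zero push_add push_neg push_mult[OF abel_plus])

theorem pid_csq_iff: "(p :: 'k::field_char_0 F2ring) \<in> pid csq \<longleftrightarrow> p \<in> symm \<and> push abel p = 0"
  using pid_symm[OF csq_symm] push_abel_pid symm_ker_pid by blast

lemma gpush_kernel_iff:
  assumes "y \<in> galg F2"
  shows "gpush f2_ab y \<in> comm_ideal ZZ \<longleftrightarrow> push abel (to_ring y) = 0"
proof -
  have "gpush f2_ab y \<in> comm_ideal ZZ \<longleftrightarrow> (\<forall>v. lk (push abel (to_ring y)) v = 0)"
    by (auto simp: comm_ideal_ZZ gpush_push[OF assms] fun_eq_iff)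
  also have "\<dots> \<longleftrightarrow> push abel (to_ring y) = 0"
    by (auto intro: poly_mapping_eqI)
  finally show ?thesis .
qed

lemma generator_galg:
  "gdot F2 (glie F2 (gvec F2 (gdelta g1)) (gvec F2 (gdelta g2)))
           (glie F2 (gvec F2 (gdelta g1)) (gvec F2 (gdelta g2))) \<in> galg F2"
  by (intro gdot_galg glie_galg gvec_galg gdelta_galg) (simp_all add: g1_def g2_def)

lemma to_ring_generator:
  "to_ring (gdot F2 (glie F2 (gvec F2 (gdelta g1)) (gvec F2 (gdelta g2)))
                    (glie F2 (gvec F2 (gdelta g1)) (gvec F2 (gdelta g2))))
   = (csq :: 'k::field_char_0 F2ring)"
proof -
  have r1: "f2_reduced g1" and r2: "f2_reduced g2" by (simp_all add: g1_def g2_def)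
  have d1: "gdelta g1 \<in> galg F2" and d2: "gdelta g2 \<in> galg F2"
    using r1 r2 by (simp_all add: gdelta_galg)
  have "to_ring (gvec F2 (gdelta g1)) = (e1 :: 'k F2ring)"
    by (simp add: to_ring_gvec[OF d1] to_ring_gdelta[OF r1] e1_def vec_part_def star_basis g1w_def)
  moreover have "to_ring (gvec F2 (gdelta g2)) = (e2 :: 'k F2ring)"
    by (simp add: to_ring_gvec[OF d2] to_ring_gdelta[OF r2] e2_def vec_part_def star_basis g2w_def)
  ultimately have "to_ring (glie F2 (gvec F2 (gdelta g1)) (gvec F2 (gdelta g2))) = (bracket :: 'k F2ring)"
    by (simp add: to_ring_glie gvec_galg d1 d2 bracket_def)
  then show ?thesis
    by (simp add: to_ring_gdot glie_galg gvec_galg d1 d2 csq_def)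
qed

theorem mainTheorem17:
  "{y \<in> sym_rep F2. gpush f2_ab y \<in> comm_ideal ZZ} =
   (pideal F2 (gdot F2 (glie F2 (gvec F2 (gdelta g1)) (gvec F2 (gdelta g2)))
                       (glie F2 (gvec F2 (gdelta g1)) (gvec F2 (gdelta g2))))
     :: (f2letter list \<Rightarrow> 'k::field_char_0) set)"
  (is "?lhs = pideal F2 ?c")
proof (rule Set.set_eqI)
  fix y :: "f2letter list \<Rightarrow> 'k"
  have "y \<in> ?lhs \<longleftrightarrow> y \<in> galg F2 \<and> to_ring y \<in> symm \<and> push abel (to_ring y) = 0"
    by (auto simp: sym_rep_iff gpush_kernel_iff)
  also have "\<dots> \<longleftrightarrow> y \<in> galg F2 \<and> to_ring y \<in> pid (to_ring ?c)"
    by (simp add: pid_csq_iff to_ring_generator)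
  also have "\<dots> \<longleftrightarrow> y \<in> pideal F2 ?c"
    by (rule pideal_iff[OF generator_galg, symmetric])
  finally show "y \<in> ?lhs \<longleftrightarrow> y \<in> pideal F2 ?c" .
qed

end
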